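(* Let $k$, $d$ and $n$ be positive integers such that $k \ge 6$ is even, $d \ge 2$, and $n = \frac{d+1}{8}(k^2-2sk+4s-4)$, where $s \in \{0,1\}$ with $s \equiv \frac{k-2}{2} \pmod 2$. Then a function $f:[n] \rightarrow \{-1,1\}$ satisfies $|f([n])| = \frac{d-1}{d+1}n$ and has no $(d,k)$-block $A\subseteq[n]$ with $f(A)=0$ if and only if $f \in \mathcal{F}_{d,k}$.
   Context: $[n]=\{1,\dots,n\}$; $f(Y)=\sum_{y\in Y}f(y)$. A block is a set of consecutive integers. A $(d,k)$-block in $[n]$ is a set $\{a_1<\dots<a_k\}\subseteq[n]$ with $a_{i+1}-a_i\le d$ for all $i$. With $k,d,s,n$ as in the claim, put $m=\frac{k-2s-2}{4}$, $b=(d+1)\frac{k}{2}+d-1$, $r=\frac{k}{2}-1+ds$ (so $n=mb+r$), and define $R_i=\{(i-1)b+1,\dots,(i-1)b+r\}$ for $1\le i\le m+1$ and $T_i=\{(i-1)b+\frac{k}{2}+ds,\dots,ib\}$ for $1\le i\le m$. The family $\mathcal{F}^+_{d,k}$ consists of the $f:[n]\to\{-1,1\}$ such that: (F1) if $s=0$: $f(x)=-1$ for $x\in R_i$ ($1\le i\le m+1$) and $f(x)=1$ for $x\in T_i$ ($1\le i\le m$); (F2) if $s=1$: (i) $f(T_i)=|T_i|=\frac{k}{2}d$ for all $1\le i\le m$; (ii) $f(R_i)=d-\frac{k}{2}+1$ for all $1\le i\le m+1$; and, writing $R_i(1)=f^{-1}(1)\cap R_i$ and letting $\mathcal{T}_i\subseteq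 R_i\cup T_i\cup R_{i+1}$ be the maximal block containing $T_i$ such that $f(\mathcal{T}_i)=|\mathcal{T}_i|$ (i.e. on which $f\equiv 1$), for $1\le i\le m$: (iii) if $R_i(1)$ is not a block, then $|\mathcal{T}_i\setminus T_i|\ge d$; (iv) if $R_i(1)$ is a block and $R_i\cap\mathcal{T}_i=\emptyset$, then $R_{i+1}(1)$ is a block and there are at most $\frac{k}{2}-1$ elements $x$ with $f(x)=-1$ lying between $R_i(1)$ and $R_{i+1}(1)$. Finally $\mathcal{F}^-_{d,k}=\{-f : f\in\mathcal{F}^+_{d,k}\}$ and $\mathcal{F}_{d,k}=\mathcal{F}^+_{d,k}\cup\mathcal{F}^-_{d,k}$. *)

theory Defs
  imports Main
begin

(* Functions f : [n] -> {-1,1} are modelled as f :: nat => int; only values on {1..n} matter. *)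

definition is_block :: "nat set \<Rightarrow> bool" where
  "is_block B \<longleftrightarrow> (\<forall>x y z. x \<in> B \<longrightarrow> z \<in> B \<longrightarrow> x \<le> y \<longrightarrow> y \<le> z \<longrightarrow> y \<in> B)"

definition dk_block :: "nat \<Rightarrow> nat \<Rightarrow> nat \<Rightarrow> nat set \<Rightarrow> bool" where
  "dk_block d k n A \<longleftrightarrow> A \<subseteq> {1..n} \<and>
     (\<exists>a::nat \<Rightarrow> nat. strict_mono_on {0..<k} a \<and> A = a ` {0..<k} \<and>
        (\<forall>i. Suc i < k \<longrightarrow> a (Suc i) - a i \<le> d))"

definition pm_m :: "nat \<Rightarrow> nat \<Rightarrow> nat" where
  "pm_m k s = (k - 2*s - 2) div 4"

definition pm_b :: "nat \<Rightarrow> nat \<Rightarrow> nat" where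
  "pm_b d k = (d + 1) * (k div 2) + d - 1"

definition pm_r :: "nat \<Rightarrow> nat \<Rightarrow> nat \<Rightarrow> nat" where
  "pm_r d k s = k div 2 - 1 + d * s"

definition R_set :: "nat \<Rightarrow> nat \<Rightarrow> nat \<Rightarrow> nat \<Rightarrow> nat set" where
  "R_set d k s i = {(i - 1) * pm_b d k + 1 .. (i - 1) * pm_b d k + pm_r d k s}"

definition T_set :: "nat \<Rightarrow> nat \<Rightarrow> nat \<Rightarrow> nat \<Rightarrow> nat set" where
  "T_set d k s i = {(i - 1) * pm_b d k + k div 2 + d * s .. i * pm_b d k}"

definition R_one :: "nat \<Rightarrow> nat \<Rightarrow> nat \<Rightarrow> (nat \<Rightarrow> int) \<Rightarrow> nat \<Rightarrow> nat set" where
  "R_one d k s f i = {x \<in> R_set d k s i. f x = 1}"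

(* the maximal block \<T>_i with T_i \<subseteq> \<T>_i \<subseteq> R_i \<union> T_i \<union> R_{i+1} on which f \<equiv> 1 *)
definition calT :: "nat \<Rightarrow> nat \<Rightarrow> nat \<Rightarrow> (nat \<Rightarrow> int) \<Rightarrow> nat \<Rightarrow> nat set" where
  "calT d k s f i = (GREATEST B. is_block B \<and> T_set d k s i \<subseteq> B \<and>
       B \<subseteq> R_set d k s i \<union> T_set d k s i \<union> R_set d k s (i + 1) \<and> sum f B = int (card B))"

definition F1 :: "nat \<Rightarrow> nat \<Rightarrow> nat \<Rightarrow> (nat \<Rightarrow> int) \<Rightarrow> bool" where
  "F1 d k s f \<longleftrightarrow>
     (\<forall>i \<in> {1..pm_m k s + 1}. \<forall>x \<in> R_set d k s i. f x = -1) \<and>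
     (\<forall>i \<in> {1..pm_m k s}. \<forall>x \<in> T_set d k s i. f x = 1)"

definition F2 :: "nat \<Rightarrow> nat \<Rightarrow> nat \<Rightarrow> (nat \<Rightarrow> int) \<Rightarrow> bool" where
  "F2 d k s f \<longleftrightarrow>
     (\<forall>i \<in> {1..pm_m k s}. sum f (T_set d k s i) = int (card (T_set d k s i))
                          \<and> int (card (T_set d k s i)) = int (k div 2) * int d) \<and>
     (\<forall>i \<in> {1..pm_m k s + 1}. sum f (R_set d k s i) = int d - int (k div 2) + 1) \<and>
     (\<forall>i \<in> {1..pm_m k s}.
        (\<not> is_block (R_one d k s f i) \<longrightarrow> card (calT d k s f i - T_set d k s i) \<ge> d) \<and>
        (is_block (R_one d k s f i) \<and> R_set d k s i \<inter> calT d k s f i = {} \<longrightarrow>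
           is_block (R_one d k s f (i + 1)) \<and>
           card {x. (\<forall>y \<in> R_one d k s f i. \<forall>z \<in> R_one d k s f (i + 1). y < x \<and> x < z)
                    \<and> f x = -1} \<le> k div 2 - 1))"

definition F_plus :: "nat \<Rightarrow> nat \<Rightarrow> nat \<Rightarrow> (nat \<Rightarrow> int) \<Rightarrow> bool" where
  "F_plus d k s f \<longleftrightarrow> (s = 0 \<longrightarrow> F1 d k s f) \<and> (s = 1 \<longrightarrow> F2 d k s f)"

definition F_minus :: "nat \<Rightarrow> nat \<Rightarrow> nat \<Rightarrow> (nat \<Rightarrow> int) \<Rightarrow> bool" where
  "F_minus d k s f \<longleftrightarrow> F_plus d k s (\<lambda>x. - f x)"

definition F_fam :: "nat \<Rightarrow> nat \<Rightarrow> nat \<Rightarrow> (nat \<Rightarrow> int) \<Rightarrow> bool" where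
  "F_fam d k s f \<longleftrightarrow> F_plus d k s f \<or> F_minus d k s f"

end

theory Submission
  imports Defs
begin

text \<open>
  The \<open>(d,k)\<close>-blocks are the \<open>k\<close>-subsets of \<open>[n]\<close> whose consecutive elements are at most \<open>d\<close> apart,
  and such a block has sum \<open>0\<close> iff it contains exactly \<open>k/2\<close> entries \<open>-1\<close>. Exchanging one element
  changes an (even) block sum by at most \<open>2\<close>, and every block can be moved to \<open>{1..k}\<close> by such
  exchanges; so if no block sum vanishes, all have the same sign. Counting \<open>-1\<close>'s, of which there are
  \<open>n/(d+1)\<close> when \<open>f([n]) = (d-1)n/(d+1)\<close>, shows that this sign is positive: every block has at most
  \<open>L = k/2 - 1\<close> entries \<open>-1\<close>. Completing the \<open>-1\<close>'s of an interval of length \<open>b\<close> to a block shows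
  that such an interval holds at most \<open>L\<close> of them; as \<open>[n]\<close> is covered by \<open>m\<close> of these intervals and
  one \<open>R\<^sub>i\<close>, and holds exactly \<open>(m+1)L\<close> entries \<open>-1\<close>, every \<open>R\<^sub>i\<close> holds exactly \<open>L\<close> and no \<open>T\<^sub>i\<close>
  holds any. For \<open>s = 0\<close> this is \<open>\<F>\<^sup>+\<close>, and no block can then collect more than \<open>L\<close> of them.
  For \<open>s = 1\<close> the remaining conditions of \<open>\<F>\<^sup>+\<close> say precisely that the \<open>-1\<close>'s of \<open>R\<^sub>i\<close> and
  \<open>R\<^sub>i\<^sub>+\<^sub>1\<close> cannot be bridged into a block with \<open>L + 1\<close> of them. The case \<open>f([n]) < 0\<close> follows
  by passing to \<open>-f\<close>.
\<close>

text \<open>Consecutive elements of \<open>A\<close> are at most \<open>d\<close> apart, phrased without enumerating \<open>A\<close>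
  (see \<open>dk_block_iff\<close>).\<close>

definition gap_bounded :: "nat \<Rightarrow> nat set \<Rightarrow> bool" where
  "gap_bounded d A \<longleftrightarrow> (\<forall>u\<in>A. \<forall>v\<in>A. \<forall>p. u \<le> p \<and> p < v \<longrightarrow> (\<exists>z\<in>A. p < z \<and> z \<le> p + d))"

lemma gap_boundedD:
  "gap_bounded d A \<Longrightarrow> u \<in> A \<Longrightarrow> v \<in> A \<Longrightarrow> u \<le> p \<Longrightarrow> p < v \<Longrightarrow> \<exists>z\<in>A. p < z \<and> z \<le> p + d"
  unfolding gap_bounded_def by blast

lemma gap_bounded_singleton: "gap_bounded d {a}"
  unfolding gap_bounded_def by auto

lemma gap_bounded_atLeastAtMost: "d \<ge> 1 \<Longrightarrow> gap_bounded d {a..b}"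
  unfolding gap_bounded_def by (auto intro!: bexI[where x="Suc _"])

lemma card_between_ge:
  assumes "gap_bounded d A" "x \<in> A" "y \<in> A" "x < y" "finite A" "d \<ge> 1"
  shows "(y - x - 1) div d \<le> card (A \<inter> {x<..<y})"
  using assms
proof (induction "y - x" arbitrary: x rule: less_induct)
  case less
  obtain z where z: "z \<in> A" "x < z" "z \<le> x + d"
    using gap_boundedD[OF less.prems(1,2,3)] less.prems(4) by auto
  show ?case
  proof (cases "z < y")
    case True
    have IH: "(y - z - 1) div d \<le> card (A \<inter> {z<..<y})"
      using less.hyps[of z] less.prems z True by auto
    have "card (insert z (A \<inter> {z<..<y})) \<le> card (A \<inter> {x<..<y})"
      using z True less.prems(5) by (intro card_mono) auto
    moreover have "card (insert z (A \<inter> {z<..<y})) = Suc (card (A \<inter> {z<..<y}))"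
      using less.prems(5) by simp
    moreover have "(y - x - 1) div d \<le> ((y - z - 1) + d) div d"
      using z True by (intro div_le_mono) auto
    moreover have "((y - z - 1) + d) div d = Suc ((y - z - 1) div d)"
      using less.prems(6) by (simp add: div_add_self2)
    ultimately show ?thesis using IH by linarith
  next
    case False
    then show ?thesis using z by simp
  qed
qed

lemma progression_bounds:
  assumes "w \<in> {x + j*d | j. 1 \<le> j \<and> j \<le> t}" "(d::nat) \<ge> 1"
  shows "x < w" "w \<le> x + t*d"
proof -
  obtain j where j: "w = x + j*d" "1 \<le> j" "j \<le> t" using assms(1) by blast
  have "1*1 \<le> j*d" using j assms(2) by (intro mult_le_mono) auto
  moreover have "j*d \<le> t*d" using j by simp
  ultimately show "x < w" "w \<le> x + t*d" using j by linarith+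
qed

lemma card_progression_le: "card {x + j*d | j. 1 \<le> j \<and> j \<le> (t::nat)} \<le> t"
proof -
  have "{x + j*d | j. 1 \<le> j \<and> j \<le> t} = (\<lambda>j. x + j*d) ` {1..t}" by auto
  then show ?thesis using card_image_le[of "{1..t}" "\<lambda>j. x + j*d"] by simp
qed

lemma progression_next_point:
  assumes "x \<le> p" "p < y" "y \<le> x + (t+1)*d" "1 \<le> (d::nat)"
  shows "(\<exists>w\<in>{x + j*d | j. 1 \<le> j \<and> j \<le> t}. p < w \<and> w \<le> p + d) \<or> y \<le> p + d"
proof -
  define j where "j = (p - x) div d + 1"
  have "d * ((p - x) div d) + (p - x) mod d = p - x" by (rule mult_div_mod_eq)
  moreover have "(p - x) mod d < d" using assms(4) by simp
  moreover have "j * d = d * ((p - x) div d) + d" unfolding j_def by (simp add: algebra_simps)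
  ultimately have j: "p < x + j*d" "x + j*d \<le> p + d" using assms(1) by linarith+
  show ?thesis
  proof (cases "j \<le> t")
    case True
    moreover have "1 \<le> j" unfolding j_def by simp
    ultimately show ?thesis using j by blast
  next
    case False
    then have "t * d \<le> ((p - x) div d) * d" unfolding j_def by simp
    also have "\<dots> \<le> p - x" by simp
    finally have "y \<le> p + d" using assms(1,3) by (simp add: algebra_simps)
    then show ?thesis by blast
  qed
qed

lemma gap_bounded_Un_progression:
  assumes X: "gap_bounded d X" "x \<in> X" "\<forall>w\<in>X. w \<le> x"
    and Y: "gap_bounded d Y" "y \<in> Y" "\<forall>w\<in>Y. y \<le> w"
    and xy: "x + t*d < y" "y \<le> x + (t+1)*d" and d: "d \<ge> 1"
  shows "gap_bounded d (X \<union> {x + j*d | j. 1 \<le> j \<and> j \<le> t} \<union> Y)"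
  unfolding gap_bounded_def
proof (intro ballI allI impI)
  let ?P = "{x + j*d | j. 1 \<le> j \<and> j \<le> t}"
  fix u v p assume u: "u \<in> X \<union> ?P \<union> Y" and v: "v \<in> X \<union> ?P \<union> Y" and p: "u \<le> p \<and> p < v"
  have P_between: "x < w \<and> w < y" if "w \<in> ?P" for w
    using progression_bounds[OF that d] xy by fastforce
  show "\<exists>z\<in>X \<union> ?P \<union> Y. p < z \<and> z \<le> p + d"
  proof (cases "p < x")
    case True
    then have "u \<notin> ?P" "u \<notin> Y" using p P_between Y(3) xy by force+
    then have "u \<in> X" using u by blast
    then obtain z where "z \<in> X" "p < z" "z \<le> p + d" using gap_boundedD[OF X(1) _ X(2)] p True by blast
    then show ?thesis by auto
  next
    case px: False
    show ?thesis
    proof (cases "y \<le> p")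
      case True
      then have "v \<notin> ?P" "v \<notin> X" using p P_between X(3) xy by force+
      then have "v \<in> Y" using v by blast
      then obtain z where "z \<in> Y" "p < z" "z \<le> p + d" using gap_boundedD[OF Y(1) Y(2)] p True by blast
      then show ?thesis by auto
    next
      case False
      then have "(\<exists>w\<in>?P. p < w \<and> w \<le> p + d) \<or> y \<le> p + d"
        using progression_next_point[of x p y t d] px xy(2) d by simp
      moreover have "p < y" using False by simp
      ultimately show ?thesis using Y(2) by blast
    qed
  qed
qed

lemma dk_block_gap_bounded:
  assumes "dk_block d k n A"
  shows "A \<subseteq> {1..n}" "card A = k" "gap_bounded d A"
proof -
  obtain a where a: "strict_mono_on {0..<k} a" "A = a ` {0..<k}"
      "\<forall>i. Suc i < k \<longrightarrow> a (Suc i) - a i \<le> d" and sub: "A \<subseteq> {1..n}"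
    using assms unfolding dk_block_def by blast
  have lt: "a i < a j" if "i < j" "j < k" for i j
    using a(1) that unfolding strict_mono_on_def by auto
  have le: "a i \<le> a j" if "i \<le> j" "j < k" for i j
    using lt[of i j] that by (cases "i = j") auto
  show "A \<subseteq> {1..n}" by (fact sub)
  show "card A = k"
    using a(2) strict_mono_on_imp_inj_on[OF a(1)] by (simp add: card_image)
  show "gap_bounded d A"
    unfolding gap_bounded_def
  proof (intro ballI allI impI)
    fix u v p assume u: "u \<in> A" and v: "v \<in> A" and p: "u \<le> p \<and> p < v"
    obtain i where i: "i < k" "u = a i" using u a(2) by auto
    obtain j where j: "j < k" "v = a j" using v a(2) by auto
    let ?I = "{t. t < k \<and> a t \<le> p}"
    define t where "t = Max ?I"
    have "t \<in> ?I" unfolding t_def using i p by (intro Max_in) auto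
    then have t: "t < k" "a t \<le> p" by auto
    have t_max: "t' \<le> t" if "t' < k" "a t' \<le> p" for t'
      unfolding t_def using that by (intro Max_ge) auto
    have "t < j"
    proof (rule ccontr)
      assume "\<not> t < j"
      then have "a j \<le> a t" using le[of j t] t by simp
      then show False using t p j by simp
    qed
    then have Suc_t: "Suc t < k" using j by simp
    have "p < a (Suc t)" using t_max[OF Suc_t] by fastforce
    moreover have "a (Suc t) - a t \<le> d" using a(3) Suc_t by blast
    moreover have "a (Suc t) \<in> A" using a(2) Suc_t by simp
    ultimately show "\<exists>z\<in>A. p < z \<and> z \<le> p + d" using t by force
  qed
qed

lemma gap_bounded_dk_block:
  assumes sub: "A \<subseteq> {1..n}" and card: "card A = k" and gap: "gap_bounded d A"
  shows "dk_block d k n A"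
proof -
  have "finite A" using sub finite_subset by blast
  then obtain l where sw: "sorted_wrt (<) l" and l: "set l = A" "length l = card A"
    using finite_set_strict_sorted by blast
  define a where "a = (\<lambda>i. l ! i)"
  have lt: "a i < a j" if "i < j" "j < k" for i j
    unfolding a_def using sorted_wrt_nth_less[OF sw that(1)] that l(2) card by simp
  have img: "A = a ` {0..<k}"
    unfolding a_def using l card by (auto simp: in_set_conv_nth)
  have "a (Suc i) - a i \<le> d" if si: "Suc i < k" for i
  proof -
    have "a i \<in> A" "a (Suc i) \<in> A" "a i < a (Suc i)" using img si lt by auto
    then obtain z where z: "z \<in> A" "a i < z" "z \<le> a i + d" using gap_boundedD[OF gap] by blast
    obtain j where j: "j < k" "z = a j" using z(1) img by auto
    have "i < j"
    proof (rule ccontr)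
      assume "\<not> i < j"
      then have "a j \<le> a i" using lt[of j i] si by (cases "i = j") auto
      then show False using z j by simp
    qed
    then have "a (Suc i) \<le> a j" using lt[of "Suc i" j] j by (cases "Suc i = j") auto
    then show ?thesis using z j by simp
  qed
  moreover have "strict_mono_on {0..<k} a" unfolding strict_mono_on_def using lt by auto
  ultimately show ?thesis unfolding dk_block_def using sub img by blast
qed

lemma dk_block_iff: "dk_block d k n A \<longleftrightarrow> A \<subseteq> {1..n} \<and> card A = k \<and> gap_bounded d A"
  using dk_block_gap_bounded[of d k n A] gap_bounded_dk_block[of A n k d] by blast

text \<open>Add a hole of the hull if there is one; otherwise the set is an interval and can be
  prolonged at one end.\<close>

lemma gap_bounded_grow:
  assumes S: "gap_bounded d S" "S \<subseteq> {1..n}" "S \<noteq> {}" "card S < n" and d: "d \<ge> 1"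
  obtains S' where "S \<subseteq> S'" "gap_bounded d S'" "S' \<subseteq> {1..n}" "card S' = Suc (card S)"
proof -
  have fin: "finite S" using S(2) finite_subset by blast
  let ?lo = "Min S" and ?hi = "Max S"
  have lo: "?lo \<in> S" "\<And>z. z \<in> S \<Longrightarrow> ?lo \<le> z" and hi: "?hi \<in> S" "\<And>z. z \<in> S \<Longrightarrow> z \<le> ?hi"
    using fin S(3) by auto
  show thesis
  proof (cases "{?lo..?hi} \<subseteq> S")
    case False
    then obtain z where z: "z \<in> {?lo..?hi}" "z \<notin> S" by blast
    have "gap_bounded d (insert z S)"
      unfolding gap_bounded_def
    proof (intro ballI allI impI)
      fix u v p assume "u \<in> insert z S" "v \<in> insert z S" "u \<le> p \<and> p < v"
      then have "?lo \<le> p" "p < ?hi" using z lo hi by fastforce+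
      then show "\<exists>w\<in>insert z S. p < w \<and> w \<le> p + d"
        using gap_boundedD[OF S(1) lo(1) hi(1)] by blast
    qed
    then show ?thesis
      using z S(2) lo hi fin by (intro that[of "insert z S"]) auto
  next
    case True
    then have S_eq: "S = {?lo..?hi}" using lo hi by auto
    have card_S: "card S = ?hi + 1 - ?lo" using arg_cong[OF S_eq, of card] by simp
    have lohi: "?lo \<le> ?hi" using lo hi by blast
    have gap: "gap_bounded d {a..b}" for a b using gap_bounded_atLeastAtMost[OF d] .
    show ?thesis
    proof (cases "?lo > 1")
      case True
      have "{?lo - 1..?hi} \<subseteq> {1..n}" using hi(1) S(2) True by auto
      moreover have "card {?lo - 1..?hi} = Suc (card S)" using True lohi card_S by simp
      moreover have "S \<subseteq> {?lo - 1..?hi}" using lo(2) hi(2) by fastforce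
      ultimately show ?thesis using that gap by blast
    next
      case False
      then have "?lo = 1" using S(2) lo by fastforce
      then have "?hi < n" using card_S S(4) by simp
      then have "{?lo..?hi + 1} \<subseteq> {1..n}" using \<open>?lo = 1\<close> by auto
      moreover have "card {?lo..?hi + 1} = Suc (card S)" using lohi card_S by simp
      moreover have "S \<subseteq> {?lo..?hi + 1}" using lo(2) hi(2) by fastforce
      ultimately show ?thesis using that gap by blast
    qed
  qed
qed

lemma extend_to_dk_block:
  assumes "gap_bounded d S" "S \<subseteq> {1..n}" "S \<noteq> {}" "card S \<le> k" "k \<le> n" "d \<ge> 1"
  shows "\<exists>A. S \<subseteq> A \<and> dk_block d k n A"
  using assms
proof (induction "k - card S" arbitrary: S)
  case 0
  then show ?case unfolding dk_block_iff by auto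
next
  case (Suc x)
  then have "card S < n" by linarith
  then obtain S' where S': "S \<subseteq> S'" "gap_bounded d S'" "S' \<subseteq> {1..n}" "card S' = Suc (card S)"
    using gap_bounded_grow Suc.prems by blast
  moreover have "x = k - card S'" "S' \<noteq> {}" "card S' \<le> k"
    using Suc.hyps(2) S'(1,4) Suc.prems(3) by auto
  ultimately obtain A where "S' \<subseteq> A" "dk_block d k n A"
    using Suc.hyps(1)[of S'] Suc.prems(5,6) by blast
  then show ?case using S'(1) by blast
qed

lemma div_add_div_le: "(x::nat) div d + y div d \<le> (x + y) div d"
  using div_add1_eq[of x y d] by linarith

lemma gap_bounded_extend_left:
  assumes S: "gap_bounded d S" "a1 \<in> S" "\<forall>w\<in>S. a1 \<le> w" and "a < a1" "1 \<le> d"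
  defines "P \<equiv> {a + j*d | j. 1 \<le> j \<and> j \<le> (a1 - a - 1) div d}"
  shows "gap_bounded d ({a} \<union> P \<union> S)" "P \<subseteq> {a<..<a1}"
    "card ({a} \<union> P \<union> S) \<le> Suc ((a1 - a - 1) div d + card S)"
proof -
  define t where "t = (a1 - a - 1) div d"
  have "t*d \<le> a1 - a - 1" unfolding t_def by (rule div_times_less_eq_dividend)
  moreover have "a1 - a - 1 < (t+1)*d"
  proof -
    have "t * d + (a1 - a - 1) mod d = a1 - a - 1" unfolding t_def by (rule div_mult_mod_eq)
    moreover have "(a1 - a - 1) mod d < d" using assms(5) by simp
    ultimately show ?thesis by simp
  qed
  ultimately have t: "a + t*d < a1" "a1 \<le> a + (t+1)*d" using assms(4) by linarith+
  show "gap_bounded d ({a} \<union> P \<union> S)" unfolding P_def t_def[symmetric]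
    by (intro gap_bounded_Un_progression[OF gap_bounded_singleton _ _ S t assms(5)]) auto
  show "P \<subseteq> {a<..<a1}"
  proof
    fix w assume "w \<in> P"
    then have "a < w" "w \<le> a + t*d" using progression_bounds[OF _ assms(5)] unfolding P_def t_def by auto
    then show "w \<in> {a<..<a1}" using t by simp
  qed
  show "card ({a} \<union> P \<union> S) \<le> Suc ((a1 - a - 1) div d + card S)"
    using card_Un_le[of "{a} \<union> P" S] card_Un_le[of "{a}" P] card_progression_le[of a d t]
    unfolding P_def t_def by simp
qed

text \<open>A set \<open>M\<close> spanning \<open>[a, a']\<close> is completed to a gap-bounded set by adding, in each gap of \<open>M\<close>,
  every \<open>d\<close>-th point; this costs at most \<open>1/d\<close> of the points missing from \<open>M\<close>.\<close>

lemma gap_bounded_cover: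
  assumes "M \<subseteq> {a..a'}" "a \<in> M" "a' \<in> M" "1 \<le> d"
  shows "\<exists>S. M \<subseteq> S \<and> S \<subseteq> {a..a'} \<and> gap_bounded d S \<and>
      card S \<le> card M + (a' + 1 - a - card M) div d"
  using assms
proof (induction "a' - a" arbitrary: a M rule: less_induct)
  case less
  show ?case
  proof (cases "a = a'")
    case True
    then have "M = {a}" using less.prems by auto
    then show ?thesis using True gap_bounded_singleton[of d a] by (intro exI[of _ "{a}"]) simp
  next
    case False
    let ?M = "M - {a}"
    define a1 where "a1 = Min ?M"
    have fin: "finite M" using less.prems(1) finite_subset by blast
    have a'_M: "a' \<in> ?M" using False less.prems(3) by simp
    have "finite ?M" "?M \<noteq> {}" using fin a'_M by auto
    then have a1: "a1 \<in> ?M" "\<And>z. z \<in> ?M \<Longrightarrow> a1 \<le> z"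
      unfolding a1_def by (rule Min_in, simp)
    then have a1_bounds: "a < a1" "a1 \<le> a'" using less.prems(1) by fastforce+
    have M_sub: "?M \<subseteq> {a1..a'}"
    proof
      fix z assume "z \<in> ?M"
      then show "z \<in> {a1..a'}" using a1(2)[of z] less.prems(1) by auto
    qed
    have "a' - a1 < a' - a" using a1_bounds by simp
    then obtain S1 where S1: "?M \<subseteq> S1" "S1 \<subseteq> {a1..a'}" "gap_bounded d S1"
        "card S1 \<le> card ?M + (a' + 1 - a1 - card ?M) div d"
      using less.hyps[of a1 ?M] M_sub a1(1) a'_M less.prems(4) by blast
    have "a1 \<in> S1" "\<forall>w\<in>S1. a1 \<le> w" using S1(1,2) a1(1) by auto
    note ext = gap_bounded_extend_left[OF S1(3) this a1_bounds(1) less.prems(4)]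
    define S where "S = {a} \<union> {a + j*d | j. 1 \<le> j \<and> j \<le> (a1 - a - 1) div d} \<union> S1"
    have "S \<subseteq> {a..a'}" "M \<subseteq> S" unfolding S_def using ext(2) S1(1,2) a1_bounds by auto
    moreover have "card S \<le> card M + (a' + 1 - a - card M) div d"
    proof -
      have "card M = Suc (card ?M)" using card_Suc_Diff1[OF fin less.prems(2)] by simp
      moreover have "card ?M \<le> a' + 1 - a1" using card_mono[OF _ M_sub] by simp
      then have "a' + 1 - a - card M = (a1 - a - 1) + (a' + 1 - a1 - card ?M)"
        using \<open>card M = Suc (card ?M)\<close> a1_bounds by simp
      then have "(a1 - a - 1) div d + (a' + 1 - a1 - card ?M) div d \<le> (a' + 1 - a - card M) div d"
        by (metis div_add_div_le)
      ultimately show ?thesis using ext(3) S1(4) unfolding S_def by linarith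
    qed
    ultimately show ?thesis using ext(1) unfolding S_def by blast
  qed
qed

lemma gap_bounded_hits_interval:
  assumes "gap_bounded d A" "u \<in> A" "v \<in> A" "u < a" "a + d - 1 < v"
  shows "\<exists>w\<in>A. a \<le> w \<and> w \<le> a + d - 1"
proof -
  have "u \<le> a - 1" "a - 1 < v" using assms(4,5) by auto
  then obtain w where "w \<in> A" "a - 1 < w" "w \<le> a - 1 + d"
    using gap_boundedD[OF assms(1-3)] by blast
  then show ?thesis using assms(4) by (intro bexI[of _ w]) auto
qed

lemma dk_block_fill_first_hole:
  assumes A: "dk_block d k n A" and "0 < k" and hole: "\<not> {Min A..Max A} \<subseteq> A"
  defines "y \<equiv> Min ({Min A..Max A} - A)"
  shows "dk_block d k n (insert y (A - {Max A}))" "y \<notin> A"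
    "Min (insert y (A - {Max A})) = Min A" "Max (insert y (A - {Max A})) < Max A"
proof -
  have sub: "A \<subseteq> {1..n}" and cA: "card A = k" and gap: "gap_bounded d A"
    using A unfolding dk_block_iff by auto
  have fin: "finite A" using sub finite_subset by blast
  have ne: "A \<noteq> {}" using cA \<open>0 < k\<close> by auto
  let ?lo = "Min A" and ?hi = "Max A"
  let ?B = "insert y (A - {?hi})"
  have lo: "?lo \<in> A" "\<And>z. z \<in> A \<Longrightarrow> ?lo \<le> z" and hi: "?hi \<in> A" "\<And>z. z \<in> A \<Longrightarrow> z \<le> ?hi"
    using fin ne by auto
  have y_hole: "y \<in> {?lo..?hi} - A" unfolding y_def using hole by (intro Min_in) auto
  then show yA: "y \<notin> A" by simp
  have y: "?lo < y" "y < ?hi" using y_hole lo hi by (auto simp: le_less)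
  have "card ?B = k" using cA hi(1) yA fin \<open>0 < k\<close> by simp
  moreover have "?B \<subseteq> {1..n}" using sub y lo hi by auto
  moreover have "gap_bounded d ?B"
    unfolding gap_bounded_def
  proof (intro ballI allI impI)
    fix u v p assume u: "u \<in> ?B" and v: "v \<in> ?B" and p: "u \<le> p \<and> p < v"
    have "v < ?hi" using v y hi by (auto simp: le_less)
    moreover obtain z where z: "z \<in> A" "p < z" "z \<le> p + d"
      using gap_boundedD[OF gap lo(1) hi(1), of p] p u v y lo hi by fastforce
    ultimately show "\<exists>z\<in>?B. p < z \<and> z \<le> p + d"
      using v p by (cases "z = ?hi") auto
  qed
  ultimately show "dk_block d k n ?B" unfolding dk_block_iff by blast
  have fin_B: "finite ?B" "?B \<noteq> {}" using fin by auto
  have "?lo \<in> ?B" using lo(1) y by auto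
  then show "Min ?B = ?lo" using fin_B lo y by (intro Min_eqI) auto
  show "Max ?B < ?hi" using fin_B y hi Max_in[OF fin_B] by (auto simp: le_less)
qed

lemma is_block_eq_atLeastAtMost:
  assumes "is_block B" "finite B" "B \<noteq> {}"
  shows "B = {Min B..Max B}"
proof
  show "B \<subseteq> {Min B..Max B}" using assms(2) by auto
  show "{Min B..Max B} \<subseteq> B"
  proof
    fix y assume "y \<in> {Min B..Max B}"
    then have "Min B \<le> y" "y \<le> Max B" by auto
    moreover have "Min B \<in> B" "Max B \<in> B" using assms(2,3) by simp_all
    ultimately show "y \<in> B" using assms(1) unfolding is_block_def by blast
  qed
qed

lemma is_block_greaterThanAtMost: "is_block {a<..(b::nat)}"
  unfolding is_block_def by auto

text \<open>The parameters of the construction: \<open>L = k/2 - 1\<close> is the largest number of \<open>-1\<close>'s in a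
  \<open>(d,k)\<close>-block with positive sum, \<open>K = k/2 + 1\<close>, and \<open>[n]\<close> splits into the blocks
  \<open>R\<^sub>1, T\<^sub>1, \<dots>, R\<^sub>m, T\<^sub>m, R\<^sub>m\<^sub>+\<^sub>1\<close> of lengths \<open>r\<close> and \<open>b - r\<close>.\<close>

locale block_construction =
  fixes d k s m L K b r n :: nat
  assumes d_ge_2: "2 \<le> d" and m_pos: "1 \<le> m" and s_le_1: "s \<le> 1"
    and k_eq: "k = 2*L + 2" and K_eq: "K = L + 2" and L_eq: "L = 2*m + s"
    and b_eq: "b = L + d*K" and r_eq: "r = L + s*d" and n_eq: "n = m*b + r"
begin

abbreviation R :: "nat \<Rightarrow> nat set" where "R \<equiv> R_set d k s"
abbreviation T :: "nat \<Rightarrow> nat set" where "T \<equiv> T_set d k s"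

lemma pm_m_eq: "pm_m k s = m"
  unfolding pm_m_def using k_eq L_eq by simp

lemma pm_b_eq: "pm_b d k = b"
  unfolding pm_b_def using k_eq K_eq b_eq d_ge_2 by (simp add: algebra_simps)

lemma R_eq: "R i = {(i-1)*b<..(i-1)*b+r}"
  unfolding R_set_def pm_b_eq pm_r_def using k_eq r_eq by (auto simp: mult.commute)

lemma T_eq: "T i = {(i-1)*b+r<..i*b}"
  unfolding T_set_def pm_b_eq using k_eq r_eq by (auto simp: mult.commute)

lemma L_ge_2: "2 \<le> L"
  using L_eq m_pos by simp

lemma b_eq_r_plus: "b = r + d*(K-s)"
proof -
  have "K - s + s = K" using K_eq s_le_1 by simp
  then have "d*(K-s) + d*s = d*K" by (metis add_mult_distrib2)
  then show ?thesis using b_eq r_eq by (simp add: algebra_simps)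
qed

lemma r_less_b: "r < b"
  using b_eq_r_plus d_ge_2 K_eq s_le_1 by simp

lemma mult_b_eq: "1 \<le> i \<Longrightarrow> i*b = (i-1)*b + b"
  by (cases i) auto

lemma n_eq_mult: "n = (d+1)*((m+1)*L)"
  using n_eq b_eq r_eq L_eq K_eq by (simp add: algebra_simps)

lemma two_k_le_n: "2*k \<le> n"
proof -
  have "b \<le> m*b" using m_pos by simp
  moreover have "2*K \<le> d*K" using d_ge_2 by simp
  ultimately show ?thesis using n_eq r_eq b_eq k_eq K_eq by linarith
qed

lemma R_subset: "i \<in> {1..m+1} \<Longrightarrow> R i \<subseteq> {1..n}"
proof -
  assume "i \<in> {1..m+1}"
  then have "(i-1)*b \<le> m*b" by (intro mult_le_mono1) auto
  then have "(i-1)*b + r \<le> n" using n_eq by linarith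
  then show ?thesis unfolding R_eq by auto
qed

lemma T_subset: "i \<in> {1..m} \<Longrightarrow> T i \<subseteq> {1..n}"
proof -
  assume "i \<in> {1..m}"
  then have "i*b \<le> m*b" by (intro mult_le_mono1) auto
  then have "i*b \<le> n" using n_eq by linarith
  then show ?thesis unfolding T_eq by auto
qed

lemma card_R: "card (R i) = r"
  unfolding R_eq by simp

lemma card_T: "1 \<le> i \<Longrightarrow> card (T i) = d*(K-s)"
  unfolding T_eq using mult_b_eq b_eq_r_plus by simp

lemma R_or_T:
  assumes x: "x \<in> {1..n}"
  shows "(\<exists>i\<in>{1..m+1}. x \<in> R i) \<or> (\<exists>i\<in>{1..m}. x \<in> T i)"
proof -
  define j where "j = (x - 1) div b"
  define \<rho> where "\<rho> = (x - 1) mod b"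
  have e: "j*b + \<rho> = x - 1" unfolding j_def \<rho>_def by (rule div_mult_mod_eq)
  have "\<rho> < b" unfolding \<rho>_def using r_less_b by simp
  show ?thesis
  proof (cases "\<rho> < r")
    case True
    have "j \<le> m"
    proof (rule ccontr)
      assume "\<not> j \<le> m"
      then have "(m+1)*b \<le> j*b" by (intro mult_le_mono1) simp
      then show False using e x n_eq r_less_b by auto
    qed
    moreover have "x \<in> R (j+1)" unfolding R_eq using e True x by auto
    ultimately show ?thesis by auto
  next
    case False
    have "j < m"
    proof (rule ccontr)
      assume "\<not> j < m"
      then have "m*b \<le> j*b" by (intro mult_le_mono1) simp
      then show False using e x n_eq False by (simp only: atLeastAtMost_iff) linarith
    qed
    moreover have "x \<in> T (j+1)" unfolding T_eq using e False x \<open>\<rho> < b\<close> by auto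
    ultimately show ?thesis by auto
  qed
qed

end

locale pm_signing = block_construction +
  fixes f :: "nat \<Rightarrow> int"
  assumes pm: "\<forall>x\<in>{1..n}. f x = 1 \<or> f x = -1"
begin

abbreviation negs :: "nat set \<Rightarrow> nat" where "negs A \<equiv> card {x\<in>A. f x = -1}"

lemma negs_split: "x \<le> y \<Longrightarrow> negs {1..y} = negs {1..x} + negs {x<..y}"
proof -
  assume "x \<le> y"
  then have "{z\<in>{1..y}. f z = -1} = {z\<in>{1..x}. f z = -1} \<union> {z\<in>{x<..y}. f z = -1}" by auto
  then show ?thesis by (simp add: card_Un_disjoint disjoint_iff)
qed

lemma card_eq_negs_add: "finite A \<Longrightarrow> card A = negs A + card {z\<in>A. f z \<noteq> -1}"
  by (subst card_Un_disjoint[symmetric]) (auto intro: arg_cong[where f=card])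

lemma sum_eq_card_minus_negs:
  assumes "A \<subseteq> {1..n}"
  shows "sum f A = int (card A) - 2 * int (negs A)"
proof -
  have fin: "finite A" using assms finite_subset by blast
  let ?P = "{x\<in>A. f x = -1}" and ?Q = "{x\<in>A. f x \<noteq> -1}"
  have "sum f ?Q = sum (\<lambda>_. 1) ?Q" using assms pm by (intro sum.cong) auto
  moreover have "sum f ?P = sum (\<lambda>_. -1) ?P" by (intro sum.cong) auto
  moreover have AU: "A = ?P \<union> ?Q" and "?P \<inter> ?Q = {}" by auto
  then have "sum f A = sum f ?P + sum f ?Q" using fin by (subst AU) (rule sum.union_disjoint, auto)
  moreover have "card A = card ?P + card ?Q" using fin AU by (subst AU) (rule card_Un_disjoint, auto)
  ultimately show ?thesis by simp
qed

lemma sum_eq_card_iff: "A \<subseteq> {1..n} \<Longrightarrow> sum f A = int (card A) \<longleftrightarrow> (\<forall>x\<in>A. f x = 1)"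
proof -
  assume A: "A \<subseteq> {1..n}"
  then have "finite A" using finite_subset by blast
  then have "sum f A = int (card A) \<longleftrightarrow> {x\<in>A. f x = -1} = {}" using sum_eq_card_minus_negs[OF A] by simp
  also have "\<dots> \<longleftrightarrow> (\<forall>x\<in>A. f x = 1)" using A pm by auto
  finally show ?thesis .
qed

lemma dk_block_sum: "dk_block d k n A \<Longrightarrow> sum f A = int k - 2 * int (negs A)"
  using sum_eq_card_minus_negs unfolding dk_block_iff by simp

lemma dk_block_sum_pos_iff: "dk_block d k n A \<Longrightarrow> 0 < sum f A \<longleftrightarrow> negs A \<le> L"
  using dk_block_sum k_eq by auto

lemma dk_block_sum_eq_0_iff: "dk_block d k n A \<Longrightarrow> sum f A = 0 \<longleftrightarrow> negs A = L + 1"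
  using dk_block_sum k_eq by auto

lemma dk_block_atLeastAtMost: "1 \<le> a \<Longrightarrow> a + k - 1 \<le> n \<Longrightarrow> dk_block d k n {a..a+k-1}"
  unfolding dk_block_iff using gap_bounded_atLeastAtMost[of d a "a+k-1"] d_ge_2 k_eq by auto

text \<open>Block sums are even, so if none of them vanishes, exchanging a single element cannot
  change the sign of the sum.\<close>

lemma sum_pos_exchange_iff:
  assumes no_zero: "\<And>A. dk_block d k n A \<Longrightarrow> sum f A \<noteq> 0"
    and A: "dk_block d k n A" and B: "dk_block d k n (insert y (A - {w}))"
    and w: "w \<in> A" and y: "y \<notin> A"
  shows "0 < sum f A \<longleftrightarrow> 0 < sum f (insert y (A - {w}))"
proof -
  let ?B = "insert y (A - {w})"
  have "A \<subseteq> {1..n}" "?B \<subseteq> {1..n}" using A B unfolding dk_block_iff by auto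
  then have fin: "finite A" and wy: "w \<in> {1..n}" "y \<in> {1..n}"
    using w finite_subset by auto
  have "sum f ?B = sum f (A - {w}) + f y" using y fin by simp
  moreover have "sum f A = sum f (A - {w}) + f w" using w fin by (simp add: sum.remove)
  moreover have "f w \<in> {-1,1}" "f y \<in> {-1,1}" using pm wy by auto
  ultimately have "\<bar>sum f ?B - sum f A\<bar> \<le> 2" by auto
  moreover have "sum f A \<ge> 2 \<or> sum f A \<le> -2" "sum f ?B \<ge> 2 \<or> sum f ?B \<le> -2"
    using dk_block_sum[OF A] dk_block_sum[OF B] no_zero[OF A] no_zero[OF B] k_eq by presburger+
  ultimately show ?thesis by linarith
qed

lemma sum_pos_iff_initial_interval:
  assumes no_zero: "\<And>A. dk_block d k n A \<Longrightarrow> sum f A \<noteq> 0"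
  shows "dk_block d k n A \<Longrightarrow> 0 < sum f A \<longleftrightarrow> 0 < sum f {Min A..Min A + k - 1}"
proof (induction "Max A - Min A" arbitrary: A rule: less_induct)
  case less
  have k_pos: "0 < k" using k_eq by simp
  have sub: "A \<subseteq> {1..n}" and cA: "card A = k" using less.prems unfolding dk_block_iff by auto
  have fin: "finite A" using sub finite_subset by blast
  have ne: "A \<noteq> {}" using cA k_pos by auto
  show ?case
  proof (cases "{Min A..Max A} \<subseteq> A")
    case True
    then have A_eq: "A = {Min A..Max A}" using fin ne by auto
    then have "card {Min A..Max A} = k" using cA by simp
    then have "Max A = Min A + k - 1" using k_eq by simp
    then have "A = {Min A..Min A + k - 1}" using A_eq by simp
    then show ?thesis by simp
  next
    case False
    let ?B = "insert (Min ({Min A..Max A} - A)) (A - {Max A})"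
    note hole = dk_block_fill_first_hole[OF less.prems k_pos False]
    have "Max ?B - Min ?B < Max A - Min A"
    proof -
      have "Max ?B \<in> ?B" using fin by (intro Max_in) auto
      then have "Min ?B \<le> Max ?B" using fin by (intro Min_le) auto
      then show ?thesis using hole(3,4) by linarith
    qed
    then have "0 < sum f ?B \<longleftrightarrow> 0 < sum f {Min A..Min A + k - 1}"
      using less.hyps[OF _ hole(1)] hole(3) by simp
    moreover have "0 < sum f A \<longleftrightarrow> 0 < sum f ?B"
      using sum_pos_exchange_iff[OF no_zero less.prems hole(1) Max_in[OF fin ne] hole(2)] .
    ultimately show ?thesis by simp
  qed
qed

lemma sum_pos_iff_shift:
  assumes no_zero: "\<And>A. dk_block d k n A \<Longrightarrow> sum f A \<noteq> 0"
  shows "1 \<le> a \<Longrightarrow> a + k \<le> n + 1 \<Longrightarrow> 0 < sum f {a..<a+k} \<longleftrightarrow> 0 < sum f {1..<1+k}"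
proof (induction a rule: nat_induct_at_least)
  case (Suc a)
  have k_pos: "0 < k" using k_eq by simp
  then have "{a..<a+k} = {a..a+k-1}" "{Suc a..<Suc a+k} = {Suc a..Suc a+k-1}" by auto
  then have "dk_block d k n {a..<a+k}" "dk_block d k n {Suc a..<Suc a+k}"
    using dk_block_atLeastAtMost[of a] dk_block_atLeastAtMost[of "Suc a"] Suc by simp_all
  moreover have "{Suc a..<Suc a+k} = insert (a + k) ({a..<a+k} - {a})" using k_pos by auto
  ultimately have "0 < sum f {a..<a+k} \<longleftrightarrow> 0 < sum f {Suc a..<Suc a+k}"
    using sum_pos_exchange_iff[OF no_zero, of "{a..<a+k}" "a+k" a] k_pos by simp
  then show ?case using Suc by simp
qed simp

lemma sum_pos_iff_first_interval:
  assumes no_zero: "\<And>A. dk_block d k n A \<Longrightarrow> sum f A \<noteq> 0" and A: "dk_block d k n A"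
  shows "0 < sum f A \<longleftrightarrow> 0 < sum f {1..k}"
proof -
  have sub: "A \<subseteq> {1..n}" and cA: "card A = k" using A unfolding dk_block_iff by auto
  have fin: "finite A" using sub finite_subset by blast
  have ne: "A \<noteq> {}" using cA k_eq by auto
  have "Min A \<in> A" "Max A \<in> A" using fin ne by simp_all
  then have lo: "1 \<le> Min A" and hi: "Max A \<le> n" using sub by auto
  have "card A \<le> card {Min A..Max A}" using fin ne by (intro card_mono) auto
  then have "Min A + k \<le> n + 1" using cA hi k_eq by simp
  moreover have "{Min A..Min A + k - 1} = {Min A..<Min A + k}" "{1..k} = {1..<1+k}" using k_eq by auto
  ultimately show ?thesis
    using sum_pos_iff_initial_interval[OF no_zero A] sum_pos_iff_shift[OF no_zero lo] by simp
qed

lemma negs_upto_mono: "x \<le> y \<Longrightarrow> negs {1..x} \<le> negs {1..y}"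
  using negs_split by fastforce

lemma negs_upto_mult_k_ge:
  assumes "\<And>A. dk_block d k n A \<Longrightarrow> L + 2 \<le> negs A"
  shows "j*k \<le> n \<Longrightarrow> j*(L+2) \<le> negs {1..j*k}"
proof (induction j)
  case (Suc j)
  have "{j*k+1..j*k+1+k-1} = {j*k<..Suc j*k}" using k_eq by auto
  then have "L + 2 \<le> negs {j*k<..Suc j*k}"
    using assms dk_block_atLeastAtMost[of "j*k+1"] Suc.prems k_eq by fastforce
  moreover have "negs {1..Suc j*k} = negs {1..j*k} + negs {j*k<..Suc j*k}" using negs_split by simp
  ultimately show ?case using Suc by simp
qed simp

text \<open>If no block sum vanishes, all block sums have the sign of \<open>f([n])\<close>: were they all negative,
  the \<open>\<lfloor>n/k\<rfloor>\<close> disjoint blocks \<open>{1..k}, {k+1..2k}, \<dots>\<close> alone would carry more than \<open>n/(d+1)\<close>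
  entries \<open>-1\<close>.\<close>

lemma dk_block_few_negs:
  assumes no_zero: "\<And>A. dk_block d k n A \<Longrightarrow> sum f A \<noteq> 0" and balanced: "n = (d+1) * negs {1..n}"
    and A: "dk_block d k n A"
  shows "negs A \<le> L"
proof -
  have "0 < sum f {1..k}"
  proof (rule ccontr)
    assume "\<not> 0 < sum f {1..k}"
    then have many: "L + 2 \<le> negs B" if "dk_block d k n B" for B
      using sum_pos_iff_first_interval[OF no_zero that] no_zero[OF that] dk_block_sum[OF that] k_eq
      by simp
    define q where "q = n div k"
    have "q * k + n mod k = n" unfolding q_def by (rule div_mult_mod_eq)
    moreover have "n mod k < k" using k_eq by simp
    ultimately have qk: "q*k \<le> n" "n < (q+1)*k" by simp_all
    have "(2*k) div k \<le> q" unfolding q_def using two_k_le_n by (rule div_le_mono)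
    moreover have "(2*k) div k = 2" using k_eq by (simp only: nonzero_mult_div_cancel_right)
    ultimately have q: "2 \<le> q" by simp
    have "q*(L+2) \<le> negs {1..q*k}" using many qk(1) by (rule negs_upto_mult_k_ge)
    then have "q*(L+2) \<le> negs {1..n}" using negs_upto_mono[OF qk(1)] by simp
    moreover have "3 * negs {1..n} \<le> (d+1) * negs {1..n}" using d_ge_2 by (intro mult_le_mono1) simp
    ultimately have "3*(q*(L+2)) \<le> n" using balanced by linarith
    moreover have "(q+1)*k \<le> 3*(q*(L+2))"
    proof -
      have "2*L \<le> q*L" using q by simp
      moreover have "(q+1)*k = 2*(q*L) + 2*q + 2*L + 2" "3*(q*(L+2)) = 3*(q*L) + 6*q"
        using k_eq by (simp_all add: algebra_simps)
      ultimately show ?thesis using q by linarith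
    qed
    ultimately show False using qk by simp
  qed
  then show ?thesis using sum_pos_iff_first_interval[OF no_zero A] dk_block_sum_pos_iff[OF A] by simp
qed

lemma negs_insert_le: "finite A \<Longrightarrow> negs (insert y A) \<le> Suc (negs A)"
proof -
  assume fin: "finite A"
  then have "negs (insert y A) \<le> card (insert y {x\<in>A. f x = -1})" by (intro card_mono) auto
  also have "\<dots> \<le> Suc (negs A)" using fin by (simp add: card_insert_if)
  finally show ?thesis .
qed

lemma negs_insert_pos: "f y \<noteq> -1 \<Longrightarrow> negs (insert y A) = negs A"
proof -
  assume "f y \<noteq> -1"
  then have "{x\<in>insert y A. f x = -1} = {x\<in>A. f x = -1}" by auto
  then show ?thesis by simp
qed

lemma gap_bounded_few_negs:
  assumes few: "\<And>A. dk_block d k n A \<Longrightarrow> negs A \<le> L"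
    and S: "gap_bounded d S" "S \<subseteq> {1..n}" "S \<noteq> {}" "card S \<le> k"
  shows "negs S \<le> L"
proof -
  obtain A where A: "S \<subseteq> A" "dk_block d k n A"
    using extend_to_dk_block[OF S] two_k_le_n d_ge_2 by auto
  then have "finite A" unfolding dk_block_iff using finite_subset by blast
  then have "negs S \<le> negs A" using A(1) by (intro card_mono) auto
  then show ?thesis using few[OF A(2)] by simp
qed

text \<open>Joined by \<open>K - 1\<close> points spaced \<open>d\<close> apart, \<open>X\<close> and \<open>Y\<close> fit into a single \<open>(d,k)\<close>-block.\<close>

lemma bridged_few_negs:
  assumes few: "\<And>A. dk_block d k n A \<Longrightarrow> negs A \<le> L"
    and X: "gap_bounded d X" "x \<in> X" "\<forall>w\<in>X. w \<le> x" "X \<subseteq> {1..n}"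
    and Y: "gap_bounded d Y" "y \<in> Y" "\<forall>w\<in>Y. y \<le> w" "Y \<subseteq> {1..n}"
    and xy: "x + d*(K-1) < y" "y \<le> x + d*K" and card_XY: "card X + card Y \<le> L + 1"
  shows "negs (X \<union> Y) \<le> L"
proof -
  let ?P = "{x + j*d | j. 1 \<le> j \<and> j \<le> K-1}"
  let ?S = "X \<union> ?P \<union> Y"
  have d1: "1 \<le> d" using d_ge_2 by simp
  have "x + (K-1)*d < y" "y \<le> x + (K-1+1)*d" using xy K_eq by (simp_all add: mult.commute)
  then have gap: "gap_bounded d ?S" by (rule gap_bounded_Un_progression[OF X(1-3) Y(1-3) _ _ d1])
  have "?P \<subseteq> {1..n}"
  proof
    fix w assume "w \<in> ?P"
    then have "x < w" "w \<le> x + (K-1)*d" using progression_bounds[OF _ d1] by auto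
    moreover have "y \<le> n" using Y(2,4) by auto
    ultimately show "w \<in> {1..n}" using xy by (simp add: mult.commute)
  qed
  then have sub: "?S \<subseteq> {1..n}" using X(4) Y(4) by auto
  have "card ?S \<le> card X + card ?P + card Y"
    by (meson add_le_mono card_Un_le le_trans order_refl)
  then have "card ?S \<le> k" using card_progression_le[of x d "K-1"] card_XY k_eq K_eq by linarith
  then have "negs ?S \<le> L" using gap_bounded_few_negs[OF few gap sub] X(2) by blast
  moreover have "finite ?S" using sub finite_subset by blast
  then have "negs (X \<union> Y) \<le> negs ?S" by (intro card_mono) auto
  ultimately show ?thesis by simp
qed

lemma neg_runs_across_gap:
  assumes few: "\<And>A. dk_block d k n A \<Longrightarrow> negs A \<le> L"
    and "a < e" "1 \<le> v" "e + d*(K-1) + v \<le> n" "e - a + v = L + 1"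
    and neg: "\<forall>z \<in> {a<..e} \<union> {e + d*(K-1)<..e + d*(K-1) + v}. f z = -1"
  shows False
proof -
  let ?X = "{a<..e}" and ?Y = "{e + d*(K-1)<..e + d*(K-1) + v}"
  have gap: "gap_bounded d {Suc x..y}" for x y using gap_bounded_atLeastAtMost d_ge_2 by simp
  have "?X \<inter> ?Y = {}" by auto
  then have "card (?X \<union> ?Y) = L + 1" using assms(5) by (simp add: card_Un_disjoint)
  moreover have "{z\<in>?X \<union> ?Y. f z = -1} = ?X \<union> ?Y" using neg by blast
  ultimately have "negs (?X \<union> ?Y) = L + 1" by simp
  moreover have "negs (?X \<union> ?Y) \<le> L"
  proof (rule bridged_few_negs[OF few])
    show "gap_bounded d ?X" "gap_bounded d ?Y" using gap by (simp_all only: atLeastSucAtMost_greaterThanAtMost)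
    show "e \<in> ?X" "\<forall>w\<in>?X. w \<le> e" using assms(2) by auto
    show "Suc (e + d*(K-1)) \<in> ?Y" "\<forall>w\<in>?Y. Suc (e + d*(K-1)) \<le> w" using assms(3) by auto
    show "?X \<subseteq> {1..n}" "?Y \<subseteq> {1..n}" using assms(4) by auto
    show "e + d*(K-1) < Suc (e + d*(K-1))" "Suc (e + d*(K-1)) \<le> e + d*K"
      using K_eq d_ge_2 by simp_all
    show "card ?X + card ?Y \<le> L + 1" using assms(5) by simp
  qed
  ultimately show False by simp
qed

text \<open>Once every block has at most \<open>L\<close> entries \<open>-1\<close>, so has every interval of length at most
  \<open>b\<close>: a shortest interval with \<open>L + 1\<close> of them starts and ends with \<open>-1\<close>, and by
  \<open>gap_bounded_cover\<close> lies inside a \<open>(d,k)\<close>-block.\<close>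

lemma interval_few_negs:
  assumes few: "\<And>A. dk_block d k n A \<Longrightarrow> negs A \<le> L"
  shows "x + \<delta> \<le> n \<Longrightarrow> \<delta> \<le> b \<Longrightarrow> negs {x<..x+\<delta>} \<le> L"
proof (induction \<delta> arbitrary: x rule: less_induct)
  case (less \<delta>)
  show ?case
  proof (rule ccontr)
    assume many: "\<not> negs {x<..x+\<delta>} \<le> L"
    then obtain e where e: "\<delta> = Suc e" by (cases \<delta>) auto
    have IH: "negs {x<..x+e} \<le> L" "negs {Suc x<..Suc x+e} \<le> L"
      using less.IH[of e x] less.IH[of e "Suc x"] less.prems e by simp_all
    have split: "{x<..x+\<delta>} = insert (x+\<delta>) {x<..x+e}" "{x<..x+\<delta>} = insert (Suc x) {Suc x<..Suc x+e}"
      using e by auto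
    have ends: "f (x+\<delta>) = -1" "f (Suc x) = -1"
      using many IH negs_insert_pos[of "x+\<delta>" "{x<..x+e}"] negs_insert_pos[of "Suc x" "{Suc x<..Suc x+e}"]
      by (metis split)+
    have "negs {x<..x+\<delta>} \<le> Suc L" using IH(1) negs_insert_le[of "{x<..x+e}" "x+\<delta>"] split(1) by simp
    then have negs_eq: "negs {Suc x..x+\<delta>} = L + 1"
      using many greaterThanAtMost_eq_atLeastAtMost_diff[of x "x+\<delta>"] by (simp add: atLeastSucAtMost_greaterThanAtMost)
    let ?M = "{z\<in>{Suc x..x+\<delta>}. f z = -1}"
    have "\<exists>S. ?M \<subseteq> S \<and> S \<subseteq> {Suc x..x+\<delta>} \<and> gap_bounded d S \<and>
        card S \<le> card ?M + (x+\<delta> + 1 - Suc x - card ?M) div d"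
      using ends e d_ge_2 by (intro gap_bounded_cover) auto
    then obtain S where S: "?M \<subseteq> S" "S \<subseteq> {Suc x..x+\<delta>}" "gap_bounded d S"
        "card S \<le> (L + 1) + (x+\<delta> + 1 - Suc x - (L + 1)) div d"
      unfolding negs_eq by blast
    have "(x+\<delta> + 1 - Suc x - (L + 1)) div d \<le> (d*K - 1) div d"
      using less.prems b_eq by (intro div_le_mono) simp
    also have "(d*K - 1) div d = K - 1"
    proof -
      have "d*K - 1 = (d - 1) + (K-1)*d" using d_ge_2 K_eq by (simp add: algebra_simps)
      moreover have "((d - 1) + (K-1)*d) div d = (K-1) + (d-1) div d"
        using d_ge_2 by (intro div_mult_self1) simp
      ultimately show ?thesis using d_ge_2 by simp
    qed
    finally have "card S \<le> k" using S(4) k_eq K_eq by simp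
    moreover have "S \<subseteq> {1..n}" using S(2) less.prems by auto
    moreover have "S \<noteq> {}" using S(1) ends e by auto
    ultimately have "negs S \<le> L" using gap_bounded_few_negs[OF few S(3)] by simp
    moreover have "finite S" using S(2) finite_subset by blast
    then have "card ?M \<le> negs S" using S(1) by (intro card_mono) auto
    ultimately show False using negs_eq by simp
  qed
qed

lemma negs_upto_mult_b_le:
  assumes few: "\<And>A. dk_block d k n A \<Longrightarrow> negs A \<le> L"
  shows "j \<le> m \<Longrightarrow> negs {1..j*b} \<le> j*L"
proof (induction j)
  case (Suc j)
  have "Suc j * b \<le> m * b" using Suc.prems by (intro mult_le_mono1)
  then have "j*b + b \<le> n" using n_eq by simp
  then have "negs {j*b<..j*b+b} \<le> L" using interval_few_negs[OF few] by simp
  moreover have "negs {1..j*b + b} = negs {1..j*b} + negs {j*b<..j*b+b}" using negs_split by simp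
  ultimately show ?case using Suc by (simp add: add.commute)
qed simp

lemma negs_upto_n_le:
  assumes few: "\<And>A. dk_block d k n A \<Longrightarrow> negs A \<le> L"
  shows "t \<le> m \<Longrightarrow> negs {1..n} \<le> negs {1..(m-t)*b + r} + t*L"
proof (induction t)
  case (Suc t)
  have e: "(m - t)*b + r = (m - Suc t)*b + r + b" using Suc.prems
    by (metis Suc_diff_Suc Suc_le_lessD add.commute add.left_commute mult_Suc)
  have "(m - t)*b + r \<le> n" using n_eq by simp
  then have "negs {(m - Suc t)*b + r<..(m - Suc t)*b + r + b} \<le> L"
    using interval_few_negs[OF few] e by simp
  moreover have "negs {1..(m - Suc t)*b + r + b} =
      negs {1..(m - Suc t)*b + r} + negs {(m - Suc t)*b + r<..(m - Suc t)*b + r + b}"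
    using negs_split by simp
  ultimately show ?case using Suc e by simp
qed (simp add: n_eq)

text \<open>Cover \<open>[n]\<close> by \<open>R\<^sub>i\<close> and \<open>m\<close> intervals of length \<open>b\<close>: each carries at most \<open>L\<close> entries
  \<open>-1\<close>, so if \<open>[n]\<close> carries \<open>(m + 1) L\<close> of them all these bounds are attained.\<close>

lemma negs_R_T:
  assumes few: "\<And>A. dk_block d k n A \<Longrightarrow> negs A \<le> L" and total: "negs {1..n} = (m+1)*L"
  shows "i \<in> {1..m+1} \<Longrightarrow> negs (R i) = L" "i \<in> {1..m} \<Longrightarrow> negs (T i) = 0"
proof -
  assume i: "i \<in> {1..m+1}"
  define j where "j = i - 1"
  have j: "j \<le> m" using i unfolding j_def by auto
  have "negs (R i) = negs {1..j*b + r} - negs {1..j*b}"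
    unfolding R_eq j_def[symmetric] using negs_split[of "j*b" "j*b + r"] by simp
  moreover have "negs {1..j*b} \<le> j*L" using negs_upto_mult_b_le[OF few j] .
  moreover have "negs {1..n} \<le> negs {1..j*b + r} + (m-j)*L" using negs_upto_n_le[OF few, of "m-j"] j by simp
  moreover have "negs (R i) \<le> L"
    unfolding R_eq j_def[symmetric] using interval_few_negs[OF few, of "j*b" r] j n_eq r_less_b
    by (simp add: add_le_mono mult_le_mono1)
  moreover have "(m+1)*L = j*L + L + (m-j)*L" using j by (simp add: algebra_simps)
  ultimately show "negs (R i) = L" using total by linarith
next
  assume i: "i \<in> {1..m}"
  define j where "j = i - 1"
  have j: "j < m" "i = j + 1" using i unfolding j_def by auto
  have "negs (T i) = negs {1..i*b} - negs {1..j*b + r}"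
    unfolding T_eq j_def[symmetric] using negs_split[of "j*b + r" "i*b"] r_less_b j by simp
  moreover have "negs {1..i*b} \<le> i*L" using negs_upto_mult_b_le[OF few, of i] j by simp
  moreover have "negs {1..n} \<le> negs {1..j*b + r} + (m-j)*L" using negs_upto_n_le[OF few, of "m-j"] j by simp
  moreover have "(m+1)*L = i*L + (m-j)*L" using j by (simp add: algebra_simps)
  ultimately show "negs (T i) = 0" using total by linarith
qed

lemma gap_div_add_negs_le:
  assumes A: "dk_block d k n A" and x: "x \<in> A" and y: "y \<in> A" and xy: "x < y"
    and between: "\<forall>z\<in>A. x < z \<and> z < y \<longrightarrow> f z \<noteq> -1"
    and extra: "W \<subseteq> {z\<in>A. f z \<noteq> -1} - {x<..<y}"
  shows "(y - x - 1) div d + card W + negs A \<le> k"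
proof -
  have sub: "A \<subseteq> {1..n}" and cA: "card A = k" and gap: "gap_bounded d A"
    using A unfolding dk_block_iff by auto
  have fin: "finite A" using sub finite_subset by blast
  have "(y - x - 1) div d + card W \<le> card (A \<inter> {x<..<y}) + card W"
    using card_between_ge[OF gap x y xy fin] d_ge_2 by simp
  also have "\<dots> = card ((A \<inter> {x<..<y}) \<union> W)"
    using extra fin by (intro card_Un_disjoint[symmetric]) (auto intro: finite_subset)
  also have "\<dots> \<le> card {z\<in>A. f z \<noteq> -1}" using between extra fin by (intro card_mono) auto
  finally show ?thesis using card_eq_negs_add[OF fin] cA by simp
qed

end

text \<open>The shape shared by all functions of \<open>\<F>\<^sup>+\<close> (lemma \<open>pm_pattern_if_F_plus\<close>).\<close>

locale pm_pattern = pm_signing +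
  assumes negs_R: "i \<in> {1..m+1} \<Longrightarrow> negs (R i) = L"
    and T_pos: "i \<in> {1..m} \<Longrightarrow> x \<in> T i \<Longrightarrow> f x = 1"
begin

text \<open>A block with more than \<open>L\<close> entries \<open>-1\<close> must contain entries \<open>-1\<close> from two different
  \<open>R\<close>'s; \<open>x\<close> and \<open>y\<close> are the last one in the first and the next one.\<close>

lemma straddling_negs:
  assumes A: "dk_block d k n A" and many: "L + 1 \<le> negs A"
  obtains i x y where "i \<in> {1..m}" "x \<in> A" "y \<in> A" "f x = -1" "f y = -1" "x \<in> R i"
    "(i-1)*b + r < y" "x < y" "\<forall>z\<in>A. f z = -1 \<longrightarrow> (i-1)*b < z \<and> (z \<le> x \<or> y \<le> z)"
    "\<forall>z\<in>A. x < z \<and> z < y \<longrightarrow> f z \<noteq> -1"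
proof -
  have sub: "A \<subseteq> {1..n}" using A unfolding dk_block_iff by simp
  let ?M = "{z\<in>A. f z = -1}"
  have "finite A" using sub finite_subset by blast
  then have finM: "finite ?M" by simp
  have neM: "?M \<noteq> {}" using many by (metis card.empty not_less_eq_eq zero_le Suc_eq_plus1)
  define u where "u = Min ?M"
  have u: "u \<in> ?M" unfolding u_def using finM neM by (rule Min_in)
  have u_le: "u \<le> z" if "z \<in> ?M" for z unfolding u_def using finM that by (rule Min_le)
  have "u \<in> {1..n}" "f u = -1" using u sub by auto
  then obtain i where i: "i \<in> {1..m+1}" "u \<in> R i"
    using R_or_T T_pos by fastforce
  have "card (?M \<inter> R i) \<le> negs (R i)" by (intro card_mono) (auto simp: R_eq)
  then have "card (?M \<inter> R i) < card ?M" using negs_R[OF i(1)] many by simp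
  then have "\<not> ?M \<subseteq> R i" by (metis Int_absorb2 less_irrefl)
  then obtain v where v: "v \<in> ?M" "v \<notin> R i" by blast
  have "u \<le> v" using u_le v(1) by simp
  then have v_gt: "(i-1)*b + r < v" using v i unfolding R_eq by auto
  have "i \<le> m"
  proof (rule ccontr)
    assume "\<not> i \<le> m"
    then have "i = m+1" using i by simp
    then show False using v_gt v sub n_eq by auto
  qed
  define x where "x = Max (?M \<inter> R i)"
  have "finite (?M \<inter> R i)" "?M \<inter> R i \<noteq> {}" using finM u i by auto
  then have x: "x \<in> ?M \<inter> R i" unfolding x_def by (rule Max_in)
  have x_ge: "z \<le> x" if "z \<in> ?M \<inter> R i" for z
    unfolding x_def using \<open>finite (?M \<inter> R i)\<close> that by (rule Max_ge)
  let ?Y = "{z\<in>?M. (i-1)*b + r < z}"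
  define y where "y = Min ?Y"
  have "finite ?Y" using finM by (rule finite_subset[rotated]) auto
  moreover have "?Y \<noteq> {}" using v v_gt by auto
  ultimately have y: "y \<in> ?Y" unfolding y_def by (rule Min_in)
  have y_le: "y \<le> z" if "z \<in> ?Y" for z unfolding y_def using \<open>finite ?Y\<close> that by (rule Min_le)
  have low: "(i-1)*b < z" if "z \<in> ?M" for z
    using u_le[OF that] i unfolding R_eq by auto
  have dich: "z \<le> x \<or> y \<le> z" if "z \<in> ?M" for z
  proof (cases "z \<le> (i-1)*b + r")
    case True
    then have "z \<in> R i" using low[OF that] unfolding R_eq by auto
    then show ?thesis using x_ge that by auto
  qed (use y_le that in auto)
  show thesis
  proof (rule that[of i x y])
    show "i \<in> {1..m}" using i \<open>i \<le> m\<close> by simp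
    show "x \<in> A" "f x = -1" "x \<in> R i" using x(1) by auto
    show "y \<in> A" "f y = -1" "(i-1)*b + r < y" using y(1) by auto
    then show "x < y" using \<open>x \<in> R i\<close> unfolding R_eq by auto
    show "\<forall>z\<in>A. f z = -1 \<longrightarrow> (i-1)*b < z \<and> (z \<le> x \<or> y \<le> z)" using low dich by blast
    show "\<forall>z\<in>A. x < z \<and> z < y \<longrightarrow> f z \<noteq> -1" using dich by fastforce
  qed
qed

lemma few_negs_if_s0:
  assumes s0: "s = 0" and A: "dk_block d k n A"
  shows "negs A \<le> L"
proof (rule ccontr)
  assume "\<not> negs A \<le> L"
  then have many: "L + 1 \<le> negs A" by simp
  obtain i x y where c: "i \<in> {1..m}" "x \<in> A" "y \<in> A" "f x = -1" "f y = -1" "x \<in> R i"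
    "(i-1)*b + r < y" "x < y" "\<forall>z\<in>A. f z = -1 \<longrightarrow> (i-1)*b < z \<and> (z \<le> x \<or> y \<le> z)"
    "\<forall>z\<in>A. x < z \<and> z < y \<longrightarrow> f z \<noteq> -1"
    by (rule straddling_negs[OF A many])
  have "y \<notin> T i" using T_pos c by auto
  then have "i*b < y" using c(7) unfolding T_eq by auto
  moreover have "x \<le> (i-1)*b + r" using c(6) unfolding R_eq by auto
  ultimately have "d*K \<le> y - x - 1" using b_eq_r_plus mult_b_eq[of i] c(1) s0 by simp
  then have "(d*K) div d \<le> (y - x - 1) div d" by (rule div_le_mono)
  then have "K \<le> (y - x - 1) div d" using d_ge_2 by simp
  then show False using gap_div_add_negs_le[OF A c(2,3,8,10), of "{}"] many k_eq K_eq by simp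
qed

abbreviation R1 :: "nat \<Rightarrow> nat set" where "R1 \<equiv> R_one d k s f"

definition last_neg :: "nat \<Rightarrow> nat" where "last_neg i = Max {z\<in>R i. f z = -1}"
definition first_neg :: "nat \<Rightarrow> nat" where "first_neg i = Min {z\<in>R i. f z = -1}"

text \<open>\<open>run i\<close> is the run of \<open>+1\<close>'s containing \<open>T\<^sub>i\<close>, i.e. \<open>\<T>\<^sub>i\<close> (lemma \<open>calT_eq_run\<close>); with it,
  \<open>run_conditions i\<close> are conditions (iii) and (iv) of \<open>\<F>\<^sup>+\<close> for \<open>s = 1\<close>, and \<open>negs_between i\<close> is the
  set counted in (iv).\<close>

definition run :: "nat \<Rightarrow> nat set" where "run i = {last_neg i<..<first_neg (i+1)}"

definition negs_between :: "nat \<Rightarrow> nat set" where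
  "negs_between i = {x. (\<forall>y\<in>R1 i. \<forall>z\<in>R1 (i+1). y < x \<and> x < z) \<and> f x = -1}"

definition run_conditions :: "nat \<Rightarrow> bool" where
  "run_conditions i \<longleftrightarrow> (\<not> is_block (R1 i) \<longrightarrow> d \<le> card (run i - T i)) \<and>
     (is_block (R1 i) \<and> R i \<inter> run i = {} \<longrightarrow> is_block (R1 (i+1)) \<and> card (negs_between i) \<le> L)"

lemma negs_R_nonempty: "i \<in> {1..m+1} \<Longrightarrow> {z\<in>R i. f z = -1} \<noteq> {}"
  using negs_R L_ge_2 by fastforce

lemma last_neg:
  assumes i: "i \<in> {1..m+1}"
  shows "last_neg i \<in> R i" "f (last_neg i) = -1" "\<And>z. z \<in> R i \<Longrightarrow> last_neg i < z \<Longrightarrow> f z = 1"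
    "\<And>z. z \<in> R i \<Longrightarrow> f z = -1 \<Longrightarrow> z \<le> last_neg i"
proof -
  let ?M = "{z\<in>R i. f z = -1}"
  have fin: "finite ?M" unfolding R_eq by simp
  have "last_neg i \<in> ?M" unfolding last_neg_def using fin negs_R_nonempty[OF i] by (rule Max_in)
  then show "last_neg i \<in> R i" "f (last_neg i) = -1" by auto
  show le: "\<And>z. z \<in> R i \<Longrightarrow> f z = -1 \<Longrightarrow> z \<le> last_neg i" unfolding last_neg_def using fin by simp
  show "\<And>z. z \<in> R i \<Longrightarrow> last_neg i < z \<Longrightarrow> f z = 1"
    using le pm R_subset[OF i] by force
qed

lemma first_neg:
  assumes i: "i \<in> {1..m+1}"
  shows "first_neg i \<in> R i" "f (first_neg i) = -1" "\<And>z. z \<in> R i \<Longrightarrow> z < first_neg i \<Longrightarrow> f z = 1"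
    "\<And>z. z \<in> R i \<Longrightarrow> f z = -1 \<Longrightarrow> first_neg i \<le> z"
proof -
  let ?M = "{z\<in>R i. f z = -1}"
  have fin: "finite ?M" unfolding R_eq by simp
  have "first_neg i \<in> ?M" unfolding first_neg_def using fin negs_R_nonempty[OF i] by (rule Min_in)
  then show "first_neg i \<in> R i" "f (first_neg i) = -1" by auto
  show le: "\<And>z. z \<in> R i \<Longrightarrow> f z = -1 \<Longrightarrow> first_neg i \<le> z" unfolding first_neg_def using fin by simp
  show "\<And>z. z \<in> R i \<Longrightarrow> z < first_neg i \<Longrightarrow> f z = 1"
    using le pm R_subset[OF i] by force
qed

lemma run_bounds:
  assumes i: "i \<in> {1..m}"
  shows "(i-1)*b < last_neg i" "last_neg i \<le> (i-1)*b + r" "i*b < first_neg (i+1)"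
    "first_neg (i+1) \<le> i*b + r" "T i \<subseteq> run i"
proof -
  have i1: "i \<in> {1..m+1}" "i+1 \<in> {1..m+1}" using i by auto
  show "(i-1)*b < last_neg i" "last_neg i \<le> (i-1)*b + r"
    using last_neg(1)[OF i1(1)] unfolding R_eq by auto
  show "i*b < first_neg (i+1)" "first_neg (i+1) \<le> i*b + r"
    using first_neg(1)[OF i1(2)] unfolding R_eq by auto
  then show "T i \<subseteq> run i"
    using \<open>last_neg i \<le> (i-1)*b + r\<close> unfolding T_eq run_def by auto
qed

lemma run_ones:
  assumes i: "i \<in> {1..m}" and z: "z \<in> run i"
  shows "f z = 1" "z \<in> R i \<union> T i \<union> R (i+1)"
proof -
  have i1: "i \<in> {1..m+1}" "i+1 \<in> {1..m+1}" using i by auto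
  have z_bounds: "last_neg i < z" "z < first_neg (i+1)" using z unfolding run_def by auto
  then show "z \<in> R i \<union> T i \<union> R (i+1)"
    using run_bounds[OF i] unfolding R_eq T_eq by auto
  then show "f z = 1"
    using last_neg(3)[OF i1(1)] first_neg(3)[OF i1(2)] T_pos[OF i] z_bounds by auto
qed

lemma negs_upto_n: "negs {1..n} = (m+1)*L"
proof -
  have upto_mult_b: "negs {1..j*b} = j*L" if "j \<le> m" for j
    using that
  proof (induction j)
    case (Suc j)
    have "negs {1..j*b + r} = negs {1..j*b} + negs (R (j+1))"
      using negs_split[of "j*b" "j*b + r"] unfolding R_eq by simp
    moreover have "negs {1..(j+1)*b} = negs {1..j*b + r} + negs (T (j+1))"
      using negs_split[of "j*b + r" "(j+1)*b"] r_less_b unfolding T_eq by simp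
    moreover have "{x\<in>T (j+1). f x = -1} = {}" using T_pos[of "j+1"] Suc.prems by force
    then have "negs (T (j+1)) = 0" by (simp only: card.empty)
    ultimately show ?case using Suc negs_R[of "j+1"] by simp
  qed simp
  have "negs {1..m*b + r} = negs {1..m*b} + negs (R (m+1))"
    using negs_split[of "m*b" "m*b + r"] unfolding R_eq by simp
  then show ?thesis using upto_mult_b[of m] negs_R[of "m+1"] n_eq by simp
qed

lemma calT_eq_run:
  assumes i: "i \<in> {1..m}"
  shows "calT d k s f i = run i"
  unfolding calT_def
proof (rule Greatest_equality)
  have i1: "i \<in> {1..m+1}" "i+1 \<in> {1..m+1}" using i by auto
  have sub: "run i \<subseteq> R i \<union> T i \<union> R (i+1)" "R i \<union> T i \<union> R (i+1) \<subseteq> {1..n}"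
    using run_ones(2)[OF i] R_subset[OF i1(1)] R_subset[OF i1(2)] T_subset[OF i] by auto
  then show "is_block (run i) \<and> T i \<subseteq> run i \<and> run i \<subseteq> R i \<union> T i \<union> R (i+1) \<and>
      sum f (run i) = int (card (run i))"
    using run_bounds(5)[OF i] run_ones(1)[OF i] sum_eq_card_iff[of "run i"]
    unfolding run_def is_block_def by auto
  fix B assume B: "is_block B \<and> T i \<subseteq> B \<and> B \<subseteq> R i \<union> T i \<union> R (i+1) \<and> sum f B = int (card B)"
  then have ones: "\<forall>z\<in>B. f z = 1" using sum_eq_card_iff[of B] sub(2) by blast
  have "i*b \<in> T i" unfolding T_eq using r_less_b mult_b_eq[of i] i by auto
  then have ib: "i*b \<in> B" using B by auto
  have between: "y \<in> B" if "x \<in> B" "z \<in> B" "x \<le> y" "y \<le> z" for x y z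
    using B that unfolding is_block_def by blast
  show "B \<le> run i"
  proof
    fix z assume z: "z \<in> B"
    have "last_neg i < z"
    proof (rule ccontr)
      assume "\<not> last_neg i < z"
      moreover have "last_neg i \<le> i*b" using run_bounds(2)[OF i] mult_b_eq[of i] i r_less_b by simp
      ultimately have "last_neg i \<in> B" using between[OF z ib] by simp
      then show False using ones last_neg(2)[OF i1(1)] by auto
    qed
    moreover have "z < first_neg (i+1)"
    proof (rule ccontr)
      assume "\<not> z < first_neg (i+1)"
      moreover have "i*b \<le> first_neg (i+1)" using run_bounds(3)[OF i] by simp
      ultimately have "first_neg (i+1) \<in> B" using between[OF ib z] by simp
      then show False using ones first_neg(2)[OF i1(2)] by auto
    qed
    ultimately show "z \<in> run i" unfolding run_def by simp
  qed
qed

context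
  assumes s1: "s = 1"
begin

lemma card_R1: "i \<in> {1..m+1} \<Longrightarrow> card (R1 i) = d"
proof -
  assume i: "i \<in> {1..m+1}"
  have "{z\<in>R i. f z \<noteq> -1} = R1 i" using R_subset[OF i] pm unfolding R_one_def by auto
  then have "card (R i) = negs (R i) + card (R1 i)"
    using card_eq_negs_add[of "R i"] unfolding R_eq by simp
  then show ?thesis using negs_R[OF i] card_R r_eq s1 by simp
qed

lemma R1_block:
  assumes i: "i \<in> {1..m+1}" and "is_block (R1 i)"
  shows "R1 i = {Min (R1 i)..Min (R1 i) + d - 1}" "R1 i \<subseteq> R i"
proof -
  have fin: "finite (R1 i)" unfolding R_one_def R_eq by simp
  moreover have ne: "R1 i \<noteq> {}" using card_R1[OF i] d_ge_2 by auto
  ultimately have e: "R1 i = {Min (R1 i)..Max (R1 i)}" by (intro is_block_eq_atLeastAtMost[OF assms(2)])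
  then have "card {Min (R1 i)..Max (R1 i)} = d" using card_R1[OF i] by simp
  moreover have "Min (R1 i) \<le> Max (R1 i)" using fin ne by simp
  ultimately have "Max (R1 i) = Min (R1 i) + d - 1" by simp
  then show "R1 i = {Min (R1 i)..Min (R1 i) + d - 1}" using e by simp
  show "R1 i \<subseteq> R i" unfolding R_one_def by auto
qed

lemma card_run_minus_T:
  assumes i: "i \<in> {1..m}"
  shows "card (run i - T i) + d*(K-1) = first_neg (i+1) - last_neg i - 1"
proof -
  have "card (run i - T i) = card (run i) - card (T i)"
    using run_bounds(5)[OF i] by (intro card_Diff_subset) (auto simp: T_eq)
  moreover have "card (T i) \<le> card (run i)"
    using run_bounds(5)[OF i] by (intro card_mono) (auto simp: run_def)
  ultimately show ?thesis unfolding run_def using card_T[of i] i s1 by simp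
qed

lemma mult_b_eq_s1: "1 \<le> i \<Longrightarrow> i*b = (i-1)*b + r + d*(K-1)"
  using mult_b_eq b_eq_r_plus s1 by simp

text \<open>If the \<open>-1\<close>'s of \<open>R\<^sub>i\<close> left a gap longer than \<open>d\<close>, it would consist of \<open>d\<close> consecutive
  \<open>+1\<close>'s, i.e. of all of \<open>R1 i\<close>.\<close>

lemma gap_bounded_negs_R:
  assumes i: "i \<in> {1..m+1}" and not_block: "\<not> is_block (R1 i)"
  shows "gap_bounded d {z\<in>R i. f z = -1}"
  unfolding gap_bounded_def
proof (intro ballI allI impI)
  let ?X = "{z\<in>R i. f z = -1}"
  fix u v p assume u: "u \<in> ?X" and v: "v \<in> ?X" and p: "u \<le> p \<and> p < v"
  show "\<exists>z\<in>?X. p < z \<and> z \<le> p + d"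
  proof (rule ccontr)
    assume no: "\<not> (\<exists>z\<in>?X. p < z \<and> z \<le> p + d)"
    then have "p + d < v" using v p by force
    then have "{p<..p+d} \<subseteq> R i" using u v p unfolding R_eq by auto
    then have "{p<..p+d} \<subseteq> R1 i" using no pm R_subset[OF i] unfolding R_one_def by fastforce
    moreover have "finite (R1 i)" unfolding R_one_def R_eq by simp
    moreover have "card {p<..p+d} = card (R1 i)" using card_R1[OF i] by simp
    ultimately have "{p<..p+d} = R1 i" by (metis card_subset_eq)
    then show False using not_block is_block_greaterThanAtMost by metis
  qed
qed

lemma blocks_if_run_short:
  assumes few: "\<And>A. dk_block d k n A \<Longrightarrow> negs A \<le> L"
    and i: "i \<in> {1..m}" and short: "first_neg (i+1) \<le> last_neg i + d*K"
  shows "is_block (R1 i)" "is_block (R1 (i+1))"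
proof -
  have i1: "i \<in> {1..m+1}" "i+1 \<in> {1..m+1}" using i by auto
  let ?x = "last_neg i" and ?y = "first_neg (i+1)"
  let ?X = "{z\<in>R i. f z = -1}" and ?Y = "{z\<in>R (i+1). f z = -1}"
  have long: "?x + d*(K-1) < ?y" using card_run_minus_T[OF i] run_bounds[OF i] mult_b_eq_s1[of i] i
    by simp
  have x: "?x \<in> ?X" "\<forall>w\<in>?X. w \<le> ?x" "?X \<subseteq> {1..n}" "card ?X = L"
    using last_neg[OF i1(1)] R_subset[OF i1(1)] negs_R[OF i1(1)] by auto
  have y: "?y \<in> ?Y" "\<forall>w\<in>?Y. ?y \<le> w" "?Y \<subseteq> {1..n}" "card ?Y = L"
    using first_neg[OF i1(2)] R_subset[OF i1(2)] negs_R[OF i1(2)] by auto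
  have fin: "finite ?X" "finite ?Y" unfolding R_eq by simp_all
  show "is_block (R1 i)"
  proof (rule ccontr)
    assume "\<not> is_block (R1 i)"
    have "?y \<notin> ?X" using x(2) long by force
    moreover have "{z\<in>?X \<union> {?y}. f z = -1} = insert ?y ?X" using y(1) by auto
    ultimately have "negs (?X \<union> {?y}) = L + 1" using x(4) fin by simp
    moreover have "negs (?X \<union> {?y}) \<le> L"
      using bridged_few_negs[OF few gap_bounded_negs_R[OF i1(1)] x(1-3) gap_bounded_singleton _ _ _ long short]
        \<open>\<not> is_block (R1 i)\<close> x(4) y(1,3) by auto
    ultimately show False by simp
  qed
  show "is_block (R1 (i+1))"
  proof (rule ccontr)
    assume "\<not> is_block (R1 (i+1))"
    have "?x \<notin> ?Y" using y(2) long by force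
    moreover have "{z\<in>{?x} \<union> ?Y. f z = -1} = insert ?x ?Y" using x(1) by auto
    ultimately have "negs ({?x} \<union> ?Y) = L + 1" using y(4) fin by simp
    moreover have "negs ({?x} \<union> ?Y) \<le> L"
      using bridged_few_negs[OF few gap_bounded_singleton _ _ _ gap_bounded_negs_R[OF i1(2)] y(1-3) long short]
        \<open>\<not> is_block (R1 (i+1))\<close> x(1,3) y(4) by auto
    ultimately show False by simp
  qed
qed

lemma d_le_card_run_if_not_block:
  assumes few: "\<And>A. dk_block d k n A \<Longrightarrow> negs A \<le> L"
    and i: "i \<in> {1..m}" and not_block: "\<not> is_block (R1 i)"
  shows "d \<le> card (run i - T i)"
proof (rule ccontr)
  assume "\<not> d \<le> card (run i - T i)"
  then have "first_neg (i+1) \<le> last_neg i + d*K"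
    using card_run_minus_T[OF i] run_bounds[OF i] mult_b_eq_s1[of i] K_eq i by simp
  then show False using blocks_if_run_short(1)[OF few i] not_block by blast
qed

lemma last_neg_eq_if_disjoint:
  assumes i: "i \<in> {1..m}" and disjoint: "R i \<inter> run i = {}"
  shows "last_neg i = (i-1)*b + r"
proof (rule ccontr)
  assume "last_neg i \<noteq> (i-1)*b + r"
  then have "last_neg i < (i-1)*b + r" using run_bounds(2)[OF i] by simp
  moreover have "(i-1)*b + r < first_neg (i+1)" using run_bounds(3)[OF i] mult_b_eq_s1[of i] i by simp
  moreover have "(i-1)*b + r \<in> R i" unfolding R_eq using L_ge_2 r_eq by auto
  ultimately show False using disjoint unfolding run_def by auto
qed

lemma next_block_if_disjoint:
  assumes few: "\<And>A. dk_block d k n A \<Longrightarrow> negs A \<le> L"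
    and i: "i \<in> {1..m}" and disjoint: "R i \<inter> run i = {}"
  shows "is_block (R1 (i+1))"
proof (cases "first_neg (i+1) \<le> last_neg i + d*K")
  case True
  then show ?thesis using blocks_if_run_short(2)[OF few i] by blast
next
  case False
  moreover have "d*K = d*(K-1) + d" using K_eq by simp
  ultimately have "i*b + d < first_neg (i+1)"
    using last_neg_eq_if_disjoint[OF i disjoint] mult_b_eq_s1[of i] i by simp
  then have "{i*b<..i*b+d} \<subseteq> R1 (i+1)"
    using first_neg(3)[of "i+1"] run_bounds(4)[OF i] i r_eq s1 unfolding R_one_def R_eq by auto
  moreover have "finite (R1 (i+1))" unfolding R_one_def R_eq by simp
  moreover have "card {i*b<..i*b+d} = card (R1 (i+1))" using card_R1[of "i+1"] i by simp
  ultimately have "{i*b<..i*b+d} = R1 (i+1)" by (metis card_subset_eq)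
  then show ?thesis using is_block_greaterThanAtMost by metis
qed

text \<open>The \<open>-1\<close>'s between \<open>R1 i\<close> and \<open>R1 (i+1)\<close> lie in the tail \<open>X\<close> of \<open>R\<^sub>i\<close> after its last \<open>+1\<close>
  and the head \<open>Y\<close> of \<open>R\<^sub>i\<^sub>+\<^sub>1\<close> before its first \<open>+1\<close>; if there were more than \<open>L\<close> of them,
  \<open>X\<close> and a part of \<open>Y\<close> could be bridged.\<close>

lemma card_negs_between_le:
  assumes few: "\<And>A. dk_block d k n A \<Longrightarrow> negs A \<le> L" and i: "i \<in> {1..m}"
    and last: "last_neg i = (i-1)*b + r"
  shows "card (negs_between i) \<le> L"
proof (rule ccontr)
  assume big: "\<not> card (negs_between i) \<le> L"
  have i1: "i \<in> {1..m+1}" "i+1 \<in> {1..m+1}" using i by auto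
  define E where "E = (i-1)*b + r"
  define \<mu> where "\<mu> = Max (R1 i)"
  define \<nu> where "\<nu> = Min (R1 (i+1))"
  have fin: "finite (R1 i)" "finite (R1 (i+1))" unfolding R_one_def R_eq by simp_all
  have ne: "R1 i \<noteq> {}" "R1 (i+1) \<noteq> {}" using card_R1 i1 d_ge_2 by fastforce+
  have \<mu>: "\<mu> \<in> R1 i" "\<And>z. z \<in> R1 i \<Longrightarrow> z \<le> \<mu>" unfolding \<mu>_def using fin ne by simp_all
  have \<nu>: "\<nu> \<in> R1 (i+1)" "\<And>z. z \<in> R1 (i+1) \<Longrightarrow> \<nu> \<le> z" unfolding \<nu>_def using fin ne by simp_all
  have "\<mu> \<noteq> E" using \<mu>(1) last_neg(2)[OF i1(1)] last unfolding E_def R_one_def by auto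
  then have \<mu>_bounds: "(i-1)*b < \<mu>" "\<mu> < E" using \<mu>(1) unfolding R_one_def R_eq E_def by auto
  have \<nu>_bounds: "i*b < \<nu>" "\<nu> \<le> i*b + r" using \<nu>(1) unfolding R_one_def R_eq by auto
  let ?X = "{\<mu><..E}" and ?Y = "{i*b<..<\<nu>}"
  have X: "?X \<subseteq> {z\<in>R i. f z = -1}"
  proof
    fix z assume z: "z \<in> ?X"
    then have "z \<in> R i" using \<mu>_bounds unfolding R_eq E_def by auto
    moreover have "z \<notin> R1 i" using \<mu>(2)[of z] z by auto
    ultimately show "z \<in> {z\<in>R i. f z = -1}" using pm R_subset[OF i1(1)] unfolding R_one_def by auto
  qed
  have Y: "?Y \<subseteq> {z\<in>R (i+1). f z = -1}"
  proof
    fix z assume z: "z \<in> ?Y"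
    then have "z \<in> R (i+1)" using \<nu>_bounds unfolding R_eq by auto
    moreover have "z \<notin> R1 (i+1)" using \<nu>(2)[of z] z by auto
    ultimately show "z \<in> {z\<in>R (i+1). f z = -1}" using pm R_subset[OF i1(2)] unfolding R_one_def by auto
  qed
  have card_X: "card ?X \<le> L" using card_mono[OF _ X] negs_R[OF i1(1)] unfolding R_eq by simp
  have "negs_between i \<subseteq> ?X \<union> ?Y"
  proof
    fix z assume z: "z \<in> negs_between i"
    then have "\<mu> < z" "z < \<nu>" "f z = -1" using \<mu>(1) \<nu>(1) unfolding negs_between_def by blast+
    moreover have "z \<notin> T i" using T_pos[OF i] \<open>f z = -1\<close> by auto
    ultimately show "z \<in> ?X \<union> ?Y" unfolding T_eq E_def by auto
  qed
  then have "card (negs_between i) \<le> card (?X \<union> ?Y)" by (intro card_mono) simp_all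
  also have "\<dots> \<le> card ?X + card ?Y" by (rule card_Un_le)
  finally have "L + 1 \<le> card ?X + card ?Y" using big by simp
  define v where "v = L + 1 - card ?X"
  have v: "1 \<le> v" "v \<le> card ?Y" "card ?X + v = L + 1"
    using card_X \<open>L + 1 \<le> card ?X + card ?Y\<close> unfolding v_def by linarith+
  have ib: "i*b = E + d*(K-1)" using mult_b_eq_s1[of i] i unfolding E_def by simp
  show False
  proof (rule neg_runs_across_gap[OF few \<mu>_bounds(2) v(1)])
    show "E + d*(K-1) + v \<le> n" "E - \<mu> + v = L + 1" using v \<nu>_bounds ib R_subset[OF i1(2)] R_eq by auto
    show "\<forall>z\<in>{\<mu><..E} \<union> {E + d*(K-1)<..E + d*(K-1) + v}. f z = -1" using X Y v ib by fastforce
  qed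
qed

lemma run_conditions_if_few:
  assumes few: "\<And>A. dk_block d k n A \<Longrightarrow> negs A \<le> L" and i: "i \<in> {1..m}"
  shows "run_conditions i"
  unfolding run_conditions_def
  using d_le_card_run_if_not_block[OF few i] next_block_if_disjoint[OF few i]
    card_negs_between_le[OF few i] last_neg_eq_if_disjoint[OF i] by blast

text \<open>A block with more than \<open>L\<close> entries \<open>-1\<close> has fewer than \<open>K\<close> entries \<open>+1\<close>, and those between \<open>x\<close>
  and \<open>y\<close> must bridge the gap in steps of at most \<open>d\<close>.\<close>

lemma straddle_bounds:
  assumes A: "dk_block d k n A" and many: "L + 1 \<le> negs A" and i: "i \<in> {1..m}"
    and xy: "x \<in> A" "y \<in> A" "x \<in> R i" "f y = -1" "(i-1)*b + r < y" "x < y"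
    and between: "\<forall>z\<in>A. x < z \<and> z < y \<longrightarrow> f z \<noteq> -1"
  shows "y - x - 1 < d*K" "y \<in> R (i+1)" "\<And>w. w \<in> A \<Longrightarrow> f w = 1 \<Longrightarrow> x < w \<and> w < y"
proof -
  have x_le: "x \<le> (i-1)*b + r" using xy(3) unfolding R_eq by auto
  have "y \<notin> T i" using T_pos[OF i] xy(4) by auto
  then have "i*b < y" using xy(5) unfolding T_eq by auto
  then have gap_ge: "d*(K-1) \<le> y - x - 1" using x_le mult_b_eq_s1[of i] i by simp
  have "(y - x - 1) div d + negs A \<le> k" using gap_div_add_negs_le[OF A xy(1,2,6) between, of "{}"] by simp
  then have "(y - x - 1) div d < K" using many k_eq K_eq by simp
  then show lt: "y - x - 1 < d*K" using d_ge_2 by (metis div_le_mono nonzero_mult_div_cancel_left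
        not_less not_numeral_le_zero)
  then have "y \<le> i*b + r" using x_le mult_b_eq_s1[of i] i r_eq s1 K_eq by (simp add: algebra_simps)
  then show "y \<in> R (i+1)" unfolding R_eq using \<open>i*b < y\<close> by simp
  fix w assume w: "w \<in> A" "f w = 1"
  show "x < w \<and> w < y"
  proof (rule ccontr)
    assume "\<not> (x < w \<and> w < y)"
    then have "(y - x - 1) div d + card {w} + negs A \<le> k"
      using w by (intro gap_div_add_negs_le[OF A xy(1,2,6) between]) auto
    moreover have "(d*(K-1)) div d \<le> (y - x - 1) div d" using gap_ge by (rule div_le_mono)
    ultimately show False using many k_eq K_eq d_ge_2 by simp
  qed
qed

lemma negs_subset_negs_between:
  assumes A: "dk_block d k n A" and i: "i \<in> {1..m}"
    and blocks: "is_block (R1 i)" "is_block (R1 (i+1))"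
    and xy: "x \<in> A" "y \<in> A" "Max (R1 i) < x" "x < y" "y < Min (R1 (i+1))"
    and pos: "\<And>w. w \<in> A \<Longrightarrow> f w = 1 \<Longrightarrow> x < w \<and> w < y"
    and neg: "\<forall>z\<in>A. f z = -1 \<longrightarrow> z \<le> x \<or> y \<le> z"
  shows "{z\<in>A. f z = -1} \<subseteq> negs_between i"
proof
  have i1: "i \<in> {1..m+1}" "i+1 \<in> {1..m+1}" using i by auto
  have gap: "gap_bounded d A" using A unfolding dk_block_iff by simp
  define \<rho> where "\<rho> = Min (R1 i)"
  define \<rho>' where "\<rho>' = Min (R1 (i+1))"
  have R1: "R1 i = {\<rho>..\<rho> + d - 1}" "R1 (i+1) = {\<rho>'..\<rho>' + d - 1}"
    using R1_block[OF i1(1) blocks(1)] R1_block[OF i1(2) blocks(2)] unfolding \<rho>_def \<rho>'_def by simp_all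
  have "Max (R1 i) = \<rho> + d - 1" unfolding R1(1) using d_ge_2 by (intro Max_eqI) auto
  then have \<rho>_x: "\<rho> + d - 1 < x" using xy(3) by simp
  have R1_pos: "f w = 1" if "w \<in> R1 i \<union> R1 (i+1)" for w using that unfolding R_one_def by auto
  fix z assume z: "z \<in> {z\<in>A. f z = -1}"
  then have zA: "z \<in> A" "f z = -1" by auto
  have "z \<notin> R1 i \<union> R1 (i+1)" using R1_pos zA(2) by fastforce
  have "\<rho> + d - 1 < z \<and> z < \<rho>'"
  proof (cases "z \<le> x")
    case True
    have "\<rho> + d - 1 < z"
    proof (rule ccontr)
      assume "\<not> \<rho> + d - 1 < z"
      then have "z < \<rho>" using \<open>z \<notin> R1 i \<union> R1 (i+1)\<close> R1(1) by auto
      then obtain w where w: "w \<in> A" "\<rho> \<le> w" "w \<le> \<rho> + d - 1"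
        using gap_bounded_hits_interval[OF gap zA(1) xy(1) _ \<rho>_x] by auto
      then have "f w = 1" using R1_pos R1(1) by auto
      then have "x < w" using pos[OF w(1)] by blast
      then show False using w(3) \<rho>_x by simp
    qed
    then show ?thesis using True xy(4,5) \<rho>'_def by simp
  next
    case False
    then have "y \<le> z" using neg zA by auto
    have "z < \<rho>'"
    proof (rule ccontr)
      assume "\<not> z < \<rho>'"
      then have "\<rho>' + d - 1 < z" using \<open>z \<notin> R1 i \<union> R1 (i+1)\<close> R1(2) by auto
      then obtain w where w: "w \<in> A" "\<rho>' \<le> w" "w \<le> \<rho>' + d - 1"
        using gap_bounded_hits_interval[OF gap xy(2) zA(1), of \<rho>'] xy(5) \<rho>'_def by auto
      then have "f w = 1" using R1_pos R1(2) by auto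
      then have "w < y" using pos[OF w(1)] by blast
      then show False using w(2) xy(5) \<rho>'_def by simp
    qed
    then show ?thesis using \<open>y \<le> z\<close> xy(4) \<rho>_x by simp
  qed
  then show "z \<in> negs_between i" unfolding negs_between_def using R1 zA(2) by auto
qed

lemma Max_R1_less:
  assumes i: "i \<in> {1..m}" and block: "is_block (R1 i)" and x: "x \<in> R i" "f x = -1"
    and close: "y - x - 1 < d*K" "i*b < y"
  shows "Max (R1 i) < x"
proof (rule ccontr)
  assume "\<not> Max (R1 i) < x"
  have i1: "i \<in> {1..m+1}" using i by auto
  define \<rho> where "\<rho> = Min (R1 i)"
  have R1: "R1 i = {\<rho>..\<rho> + d - 1}" using R1_block(1)[OF i1 block] unfolding \<rho>_def by simp
  have "Max (R1 i) = \<rho> + d - 1" unfolding R1 using d_ge_2 by (intro Max_eqI) auto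
  moreover have "x \<notin> R1 i" using x(2) unfolding R_one_def by auto
  ultimately have "x < \<rho>" using \<open>\<not> Max (R1 i) < x\<close> R1 by auto
  moreover have "\<rho> + d - 1 \<in> R i" using R1 R1_block(2)[OF i1 block] d_ge_2 by auto
  then have "\<rho> + d - 1 \<le> (i-1)*b + r" unfolding R_eq by auto
  ultimately have "d*K \<le> y - x - 1"
    using close(2) mult_b_eq_s1[of i] i K_eq d_ge_2 by (simp add: algebra_simps)
  then show False using close(1) by simp
qed

lemma less_Min_R1_next:
  assumes i: "i \<in> {1..m}" and block: "is_block (R1 (i+1))" and y: "y \<in> R (i+1)" "f y = -1"
    and close: "y - x - 1 < d*K" "x \<le> (i-1)*b + r"
  shows "y < Min (R1 (i+1))"
proof (rule ccontr)
  assume "\<not> y < Min (R1 (i+1))"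
  have i1: "i+1 \<in> {1..m+1}" using i by auto
  define \<rho> where "\<rho> = Min (R1 (i+1))"
  have R1: "R1 (i+1) = {\<rho>..\<rho> + d - 1}" using R1_block(1)[OF i1 block] unfolding \<rho>_def by simp
  moreover have "y \<notin> R1 (i+1)" using y(2) unfolding R_one_def by auto
  ultimately have "\<rho> + d - 1 < y" using \<open>\<not> y < Min (R1 (i+1))\<close> \<rho>_def by auto
  moreover have "\<rho> \<in> R (i+1)" using R1 R1_block(2)[OF i1 block] d_ge_2 by auto
  then have "i*b < \<rho>" unfolding R_eq by auto
  ultimately have "d*K \<le> y - x - 1"
    using close(2) mult_b_eq_s1[of i] i K_eq d_ge_2 by (simp add: algebra_simps)
  then show False using close(1) by simp
qed

text \<open>The run conditions force a block with \<open>L + 1\<close> entries \<open>-1\<close> to avoid the \<open>+1\<close>-blocks \<open>R1 i\<close> and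
  \<open>R1 (i+1)\<close>, so that all its \<open>-1\<close>'s are counted by \<open>negs_between i\<close>.\<close>

lemma few_negs_if_run_conditions:
  assumes rc: "\<And>i. i \<in> {1..m} \<Longrightarrow> run_conditions i" and A: "dk_block d k n A"
  shows "negs A \<le> L"
proof (rule ccontr)
  assume "\<not> negs A \<le> L"
  then have many: "L + 1 \<le> negs A" by simp
  obtain i x y where c: "i \<in> {1..m}" "x \<in> A" "y \<in> A" "f x = -1" "f y = -1" "x \<in> R i"
    "(i-1)*b + r < y" "x < y" "\<forall>z\<in>A. f z = -1 \<longrightarrow> (i-1)*b < z \<and> (z \<le> x \<or> y \<le> z)"
    "\<forall>z\<in>A. x < z \<and> z < y \<longrightarrow> f z \<noteq> -1"
    by (rule straddling_negs[OF A many])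
  have i1: "i \<in> {1..m+1}" "i+1 \<in> {1..m+1}" using c(1) by auto
  note close = straddle_bounds[OF A many c(1) c(2,3,6,5,7,8,10)]
  have x_le: "x \<le> (i-1)*b + r" using c(6) unfolding R_eq by auto
  have "i*b < y" using close(2) unfolding R_eq by auto
  have "last_neg i + d*(K-1) + card (run i - T i) < last_neg i + d*K"
    using card_run_minus_T[OF c(1)] last_neg(4)[OF i1(1) c(6,4)] first_neg(4)[OF i1(2) close(2) c(5)]
      close(1) run_bounds[OF c(1)] by simp
  then have "card (run i - T i) < d" using K_eq by (simp add: algebra_simps)
  then have block: "is_block (R1 i)" using rc[OF c(1)] unfolding run_conditions_def by auto
  have Max_x: "Max (R1 i) < x" by (rule Max_R1_less[OF c(1) block c(6,4) close(1) \<open>i*b < y\<close>])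
  have "last_neg i = (i-1)*b + r"
  proof (rule ccontr)
    assume "last_neg i \<noteq> (i-1)*b + r"
    then have "last_neg i < (i-1)*b + r" using run_bounds(2)[OF c(1)] by simp
    moreover have "(i-1)*b + r \<in> R i" unfolding R_eq using L_ge_2 r_eq by auto
    ultimately have "(i-1)*b + r \<in> R1 i" using last_neg(3)[OF i1(1)] unfolding R_one_def by auto
    then have "(i-1)*b + r \<le> Max (R1 i)" unfolding R_one_def R_eq by simp
    then show False using Max_x last_neg(4)[OF i1(1) c(6,4)] \<open>last_neg i < (i-1)*b + r\<close> by simp
  qed
  then have "R i \<inter> run i = {}" unfolding R_eq run_def by auto
  then have block': "is_block (R1 (i+1))" and few_between: "card (negs_between i) \<le> L"
    using rc[OF c(1)] block unfolding run_conditions_def by auto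
  have "y < Min (R1 (i+1))" by (rule less_Min_R1_next[OF c(1) block' close(2) c(5) close(1) x_le])
  then have "{z\<in>A. f z = -1} \<subseteq> negs_between i"
    using negs_subset_negs_between[OF A c(1) block block' c(2,3) Max_x c(8)] close(3) c(9) by blast
  moreover have "finite (negs_between i)"
  proof -
    have "R1 i \<noteq> {}" "R1 (i+1) \<noteq> {}" using card_R1 i1 d_ge_2 by fastforce+
    then have "Min (R1 (i+1)) \<in> R1 (i+1)" unfolding R_one_def R_eq by (intro Min_in) auto
    then have "negs_between i \<subseteq> {..<Min (R1 (i+1))}"
      using \<open>R1 i \<noteq> {}\<close> unfolding negs_between_def by blast
    then show ?thesis using finite_subset by blast
  qed
  ultimately have "negs A \<le> card (negs_between i)" by (intro card_mono) auto
  then show False using few_between many by simp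
qed

end

lemma F_plus_iff_run_conditions: "F_plus d k s f \<longleftrightarrow> (s = 1 \<longrightarrow> (\<forall>i\<in>{1..m}. run_conditions i))"
proof (cases "s = 0")
  case True
  have "\<forall>x\<in>R i. f x = -1" if "i \<in> {1..m+1}" for i
  proof -
    have "finite (R i)" unfolding R_eq by simp
    moreover have "negs (R i) = card (R i)" using negs_R[OF that] card_R r_eq True by simp
    ultimately have "{x\<in>R i. f x = -1} = R i" by (intro card_subset_eq) auto
    then show ?thesis by blast
  qed
  then show ?thesis unfolding F_plus_def F1_def pm_m_eq using True T_pos by auto
next
  case False
  then have s1: "s = 1" using s_le_1 by simp
  have k2: "k div 2 = L + 1" using k_eq by simp
  have T: "sum f (T i) = int (card (T i)) \<and> int (card (T i)) = int (k div 2) * int d"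
    if "i \<in> {1..m}" for i
    using sum_eq_card_iff[OF T_subset[OF that]] T_pos[OF that] card_T[of i] that k2 K_eq s1
    by (simp add: algebra_simps)
  have R: "sum f (R i) = int d - int (k div 2) + 1" if "i \<in> {1..m+1}" for i
    using sum_eq_card_minus_negs[OF R_subset[OF that]] negs_R[OF that] card_R r_eq s1 k2 by simp
  show ?thesis
    unfolding F_plus_def F2_def pm_m_eq run_conditions_def negs_between_def
    using T R calT_eq_run k2 s1 by auto
qed

end

context pm_signing
begin

lemma pm_pattern_if_F_plus:
  assumes "F_plus d k s f"
  shows "pm_pattern d k s m L K b r n f"
proof
  fix i assume i: "i \<in> {1..m+1}"
  have "finite (R i)" unfolding R_eq by simp
  show "negs (R i) = L"
  proof (cases "s = 0")
    case True
    then have "{x\<in>R i. f x = -1} = R i" using assms i unfolding F_plus_def F1_def pm_m_eq by auto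
    then show ?thesis using card_R r_eq True by simp
  next
    case False
    then have "s = 1" using s_le_1 by simp
    then show ?thesis
      using assms i sum_eq_card_minus_negs[OF R_subset[OF i]] card_R r_eq k_eq
      unfolding F_plus_def F2_def pm_m_eq by auto
  qed
next
  fix i x assume i: "i \<in> {1..m}" and x: "x \<in> T i"
  show "f x = 1"
  proof (cases "s = 0")
    case True
    then show ?thesis using assms i x unfolding F_plus_def F1_def pm_m_eq by auto
  next
    case False
    then have "sum f (T i) = int (card (T i))" using assms i s_le_1 unfolding F_plus_def F2_def pm_m_eq by auto
    then show ?thesis using sum_eq_card_iff[OF T_subset[OF i]] x by blast
  qed
qed

lemma balanced_iff: "(int d + 1) * sum f {1..n} = (int d - 1) * int n \<longleftrightarrow> n = (d+1) * negs {1..n}"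
proof -
  define N where "N = negs {1..n}"
  have e: "sum f {1..n} = int n - 2 * int N" unfolding N_def using sum_eq_card_minus_negs by simp
  have "(int d + 1) * sum f {1..n} - (int d - 1) * int n = 2 * (int n - (int d + 1) * int N)"
    unfolding e by (simp add: algebra_simps)
  then have "(int d + 1) * sum f {1..n} = (int d - 1) * int n \<longleftrightarrow> int n = (int d + 1) * int N"
    by arith
  also have "\<dots> \<longleftrightarrow> int n = int ((d+1) * N)" by (simp add: algebra_simps)
  finally show ?thesis unfolding N_def of_nat_eq_iff .
qed

theorem F_plus_iff:
  "F_plus d k s f \<longleftrightarrow>
     (\<forall>A. dk_block d k n A \<longrightarrow> sum f A \<noteq> 0) \<and> (int d + 1) * sum f {1..n} = (int d - 1) * int n"
proof
  assume F: "F_plus d k s f"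
  then interpret pm_pattern d k s m L K b r n f by (rule pm_pattern_if_F_plus)
  have "negs A \<le> L" if "dk_block d k n A" for A
    using few_negs_if_s0 few_negs_if_run_conditions F F_plus_iff_run_conditions s_le_1 that
    by (cases "s = 0") auto
  then show "(\<forall>A. dk_block d k n A \<longrightarrow> sum f A \<noteq> 0) \<and> (int d + 1) * sum f {1..n} = (int d - 1) * int n"
    using dk_block_sum_eq_0_iff balanced_iff negs_upto_n n_eq_mult by fastforce
next
  assume "(\<forall>A. dk_block d k n A \<longrightarrow> sum f A \<noteq> 0) \<and> (int d + 1) * sum f {1..n} = (int d - 1) * int n"
  then have "\<And>A. dk_block d k n A \<Longrightarrow> sum f A \<noteq> 0" and "n = (d+1) * negs {1..n}"
    using balanced_iff by auto
  then have few: "\<And>A. dk_block d k n A \<Longrightarrow> negs A \<le> L" using dk_block_few_negs by blast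
  have "(d+1) * negs {1..n} = (d+1) * ((m+1)*L)"
    using \<open>n = (d+1) * negs {1..n}\<close> n_eq_mult by (rule trans[OF sym])
  then have "negs {1..n} = (m+1)*L" by (simp only: mult_cancel1) simp
  then interpret pm_pattern d k s m L K b r n f
  proof unfold_locales
    fix i x assume i: "i \<in> {1..m}" and x: "x \<in> T i"
    have "finite (T i)" unfolding T_eq by simp
    then have "{x\<in>T i. f x = -1} = {}" using negs_R_T(2)[OF few \<open>negs {1..n} = (m+1)*L\<close> i] by simp
    then show "f x = 1" using x pm T_subset[OF i] by fastforce
  qed (rule negs_R_T(1)[OF few])
  show "F_plus d k s f" using F_plus_iff_run_conditions run_conditions_if_few[OF _ few] by blast
qed

end

lemma block_construction_instance:
  fixes k d n s :: nat
  assumes "6 \<le> k" "even k" "2 \<le> d" "s \<in> {0, 1}" "s mod 2 = ((k - 2) div 2) mod 2"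
    and n: "8 * int n = (int d + 1) * (int k ^ 2 - 2 * int s * int k + 4 * int s - 4)"
  shows "block_construction d k s (pm_m k s) (k div 2 - 1) (k div 2 + 1) (pm_b d k) (pm_r d k s) n"
proof -
  define L where "L = k div 2 - 1"
  define q where "q = L div 2"
  have k: "k = 2*L + 2" using assms(1,2) unfolding L_def by auto
  have "L mod 2 = s" using k assms(4,5) by auto
  then have L: "L = 2*q + s" unfolding q_def by presburger
  define X where "X = q*(L + d*(L+2)) + (L + s*d)"
  have "8 * int n = 8 * int X"
    unfolding n X_def using k L by (simp add: algebra_simps power2_eq_square)
  then have "n = X" by simp
  then have "n = q*(L + d*(L+2)) + (L + s*d)" unfolding X_def .
  moreover have "pm_m k s = q" "pm_b d k = L + d*(L+2)" "pm_r d k s = L + s*d"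
    unfolding pm_m_def pm_b_def pm_r_def using k L assms(3) by (simp_all add: algebra_simps)
  moreover have "1 \<le> q" using L k assms(1,4) by auto
  ultimately show ?thesis
    unfolding block_construction_def L_def[symmetric] using assms(3,4) k L by auto
qed

theorem theorem3p7:
  fixes k d n s :: nat
  assumes "0 < k" and "0 < d" and "0 < n"
    and "6 \<le> k" and "even k" and "2 \<le> d"
    and "s \<in> {0, 1}" and "s mod 2 = ((k - 2) div 2) mod 2"
    and "8 * int n = (int d + 1) * (int k ^ 2 - 2 * int s * int k + 4 * int s - 4)"
  shows "\<forall>f :: nat \<Rightarrow> int. (\<forall>x \<in> {1..n}. f x \<in> {-1, 1}) \<longrightarrow>
     (((int d + 1) * \<bar>sum f {1..n}\<bar> = (int d - 1) * int n \<and>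
      \<not> (\<exists>A. dk_block d k n A \<and> sum f A = 0))
     \<longleftrightarrow> F_fam d k s f)"
proof (intro allI impI)
  fix f :: "nat \<Rightarrow> int"
  assume f: "\<forall>x \<in> {1..n}. f x \<in> {-1, 1}"
  interpret block_construction d k s "pm_m k s" "k div 2 - 1" "k div 2 + 1" "pm_b d k" "pm_r d k s" n
    using block_construction_instance[OF assms(4-9)] .
  interpret pos: pm_signing d k s "pm_m k s" "k div 2 - 1" "k div 2 + 1" "pm_b d k" "pm_r d k s" n f
    using f by unfold_locales auto
  interpret neg: pm_signing d k s "pm_m k s" "k div 2 - 1" "k div 2 + 1" "pm_b d k" "pm_r d k s" n
      "\<lambda>x. - f x"
    using f by unfold_locales auto
  have "0 \<le> (int d - 1) * int n" using assms(6) by simp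
  moreover have "(int d + 1) * \<bar>S\<bar> = \<bar>(int d + 1) * S\<bar>" "(int d + 1) * - S = - ((int d + 1) * S)"
    for S :: int by (simp_all add: abs_mult)
  ultimately have "(int d + 1) * \<bar>S\<bar> = (int d - 1) * int n \<longleftrightarrow>
      (int d + 1) * S = (int d - 1) * int n \<or> (int d + 1) * - S = (int d - 1) * int n" for S :: int
    by (metis abs_of_nonneg abs_minus_cancel abs_if)
  then show "((int d + 1) * \<bar>sum f {1..n}\<bar> = (int d - 1) * int n \<and>
      \<not> (\<exists>A. dk_block d k n A \<and> sum f A = 0)) \<longleftrightarrow> F_fam d k s f"
    unfolding F_fam_def F_minus_def pos.F_plus_iff neg.F_plus_iff sum_negf by auto
qed

end
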